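(* Let $\Phi$ satisfy (C.1)--(C.3). Any crossover design which is $\phi_1$-optimal for $\Phi$ under the model with independent homoscedastic errors is still $\phi_1$-optimal for the same $\Phi$ when the within-subject covariance matrix of the errors is of the form $\Sigma=I_p+\eta1_p'+1_p\eta'$ for an arbitrary vector $\eta\in\mathbb R^p$ (in particular for compound symmetry $\Sigma=I_p+bJ_p$, $b\in\mathbb R$).
   Context: A crossover design $d$ with $p$ periods, $t$ treatments, $n$ subjects assigns treatment $d(k,u)$ to subject $u$ in period $k$; responses follow $Y_d=1_{np}\mu+Z\pi+U\varsigma+T_d\tau+F_d\gamma+\varepsilon$, with $Z=1_n\otimes I_p$, $U=I_n\otimes1_p$, $T_d$ the treatment incidence matrix and $F_d$ the carryover incidence matrix (rows ordered by subject then period; carryover row in period 1 is zero). Dropout: $l_u\in\{1,\dots,p\}$ is the number of periods subject $u$ stays (no re-entry), $l_1,\dots,l_n$ i.i.d. with $P(l_u=k)=a_k$, independent of design and outcomes; only the first $l_u$ responses of subject $u$ are observed. $I^k_{ij}$ is the $i\times j$ matrix with $I_k$ in its upper-left block, zeros elsewhere; $M=\mathrm{diag}(I^{l_1}_{l_1p},\dots,I^{l_n}_{l_np})$; $\mathrm{pr}^\perp(G)=I-G(G'G)^-G'$. The within-subject error covariance is a positive definite $p\times p$ matrix $\Sigma$ (errors of distinct subjects independent); $\Sigma_k$ is its upper-left $k\times k$ submatrix and $W=\mathrm{diag}(\Sigma_{l_1}^{-1},\dots,\Sigma_{l_n}^{-1})$. Define $O_\Sigma=M'W^{1/2}\mathrm{pr}^\perp([W^{1/2}MZ|W^{1/2}MU])W^{1/2}M$,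 $C_{d11}(l)=T_d'O_\Sigma T_d$, $C_{d12}(l)=T_d'O_\Sigma F_d=C_{d21}(l)'$, $C_{d22}(l)=F_d'O_\Sigma F_d$, $C_{dij}=\mathbb E\,C_{dij}(l)$ and $C_d=C_{d11}-C_{d12}C_{d22}^-C_{d21}$; the homoscedastic model is $\Sigma=I_p$. A criterion $\Phi$ is a real function on $t\times t$ nonnegative definite matrices with (C.1) concave, (C.2) $\Phi(S'CS)=\Phi(C)$ for permutation matrices $S$, (C.3) $b\mapsto\Phi(bC)$ nondecreasing on $b>0$. $\phi_1(d)=\Phi(C_d)$; a design is $\phi_1$-optimal if it maximizes $\phi_1$ over all designs with the same $p,t,n$ and dropout distribution. *)

theory Defs
  imports "Jordan_Normal_Form.Matrix" "HOL-Combinatorics.Permutations"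
begin

text \<open>Indices start at 0: periods k < p, subjects u < n, treatments in {0..<t}.
  Rows of np-row matrices are ordered by subject then period: row u*p+k.\<close>

definition nnd_mat :: "nat \<Rightarrow> real mat \<Rightarrow> bool" where
  "nnd_mat m A \<longleftrightarrow> A \<in> carrier_mat m m \<and> transpose_mat A = A \<and>
     (\<forall>v \<in> carrier_vec m. v \<bullet> (A *\<^sub>v v) \<ge> 0)"

definition pd_mat :: "nat \<Rightarrow> real mat \<Rightarrow> bool" where
  "pd_mat m A \<longleftrightarrow> A \<in> carrier_mat m m \<and> transpose_mat A = A \<and>
     (\<forall>v \<in> carrier_vec m. v \<noteq> 0\<^sub>v m \<longrightarrow> v \<bullet> (A *\<^sub>v v) > 0)"

definition minv :: "real mat \<Rightarrow> real mat" where
  "minv A = (SOME B. B \<in> carrier_mat (dim_row A) (dim_row A) \<and>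
      A * B = 1\<^sub>m (dim_row A) \<and> B * A = 1\<^sub>m (dim_row A))"

definition ginv :: "real mat \<Rightarrow> real mat" where
  "ginv A = (SOME G. G \<in> carrier_mat (dim_col A) (dim_row A) \<and> A * G * A = A)"

definition msqrt :: "real mat \<Rightarrow> real mat" where
  "msqrt A = (SOME S. nnd_mat (dim_row A) S \<and> S * S = A)"

definition pr_perp :: "real mat \<Rightarrow> real mat" where
  "pr_perp G = 1\<^sub>m (dim_row G) - G * ginv (transpose_mat G * G) * transpose_mat G"

definition hcat :: "real mat \<Rightarrow> real mat \<Rightarrow> real mat" where
  "hcat A B = mat (dim_row A) (dim_col A + dim_col B)
     (\<lambda>(i,j). if j < dim_col A then A $$ (i,j) else B $$ (i, j - dim_col A))"

definition Ik :: "nat \<Rightarrow> nat \<Rightarrow> nat \<Rightarrow> real mat" where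
  "Ik k i j = mat i j (\<lambda>(r,c). if r = c \<and> r < k then 1 else 0)"

definition ulsub :: "nat \<Rightarrow> real mat \<Rightarrow> real mat" where
  "ulsub k A = mat k k (\<lambda>(i,j). A $$ (i,j))"

definition Zmat :: "nat \<Rightarrow> nat \<Rightarrow> real mat" where
  "Zmat n p = mat (n*p) p (\<lambda>(r,c). if r mod p = c then 1 else 0)"

definition Umat :: "nat \<Rightarrow> nat \<Rightarrow> real mat" where
  "Umat n p = mat (n*p) n (\<lambda>(r,c). if r div p = c then 1 else 0)"

text \<open>treatment and carryover incidence matrices of design d\<close>
definition Tmat :: "nat \<Rightarrow> nat \<Rightarrow> nat \<Rightarrow> (nat \<Rightarrow> nat \<Rightarrow> nat) \<Rightarrow> real mat" where
  "Tmat p t n d = mat (n*p) t (\<lambda>(r,c). if d (r mod p) (r div p) = c then 1 else 0)"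

definition Fmat :: "nat \<Rightarrow> nat \<Rightarrow> nat \<Rightarrow> (nat \<Rightarrow> nat \<Rightarrow> nat) \<Rightarrow> real mat" where
  "Fmat p t n d = mat (n*p) t (\<lambda>(r,c).
     if r mod p \<noteq> 0 \<and> d (r mod p - 1) (r div p) = c then 1 else 0)"

definition Mmat :: "nat \<Rightarrow> nat \<Rightarrow> (nat \<Rightarrow> nat) \<Rightarrow> real mat" where
  "Mmat p n l = diag_block_mat (map (\<lambda>u. Ik (l u) (l u) p) [0..<n])"

definition Wmat :: "real mat \<Rightarrow> nat \<Rightarrow> (nat \<Rightarrow> nat) \<Rightarrow> real mat" where
  "Wmat \<Sigma> n l = diag_block_mat (map (\<lambda>u. minv (ulsub (l u) \<Sigma>)) [0..<n])"

definition Omat :: "real mat \<Rightarrow> nat \<Rightarrow> nat \<Rightarrow> (nat \<Rightarrow> nat) \<Rightarrow> real mat" where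
  "Omat \<Sigma> p n l = (let M = Mmat p n l; Wh = msqrt (Wmat \<Sigma> n l) in
     transpose_mat M * Wh * pr_perp (hcat (Wh * M * Zmat n p) (Wh * M * Umat n p)) * Wh * M)"

definition Cl :: "real mat \<Rightarrow> nat \<Rightarrow> nat \<Rightarrow> nat \<Rightarrow> (nat \<Rightarrow> nat \<Rightarrow> nat) \<Rightarrow> nat \<Rightarrow> nat
    \<Rightarrow> (nat \<Rightarrow> nat) \<Rightarrow> real mat" where
  "Cl \<Sigma> p t n d i j l = (let X = (\<lambda>k. if k = 1 then Tmat p t n d else Fmat p t n d) in
     transpose_mat (X i) * Omat \<Sigma> p n l * X j)"

text \<open>Expectation over i.i.d. dropout l_1..l_n with P(l_u = k) = a k, k in {1..p}
  (subject u is index u-1 here).\<close>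
definition Cexp :: "real mat \<Rightarrow> nat \<Rightarrow> nat \<Rightarrow> nat \<Rightarrow> (nat \<Rightarrow> real) \<Rightarrow> (nat \<Rightarrow> nat \<Rightarrow> nat)
    \<Rightarrow> nat \<Rightarrow> nat \<Rightarrow> real mat" where
  "Cexp \<Sigma> p t n a d i j = mat t t (\<lambda>(r,c).
     \<Sum>l \<in> PiE {0..<n} (\<lambda>_. {1..p}). (\<Prod>u<n. a (l u)) * Cl \<Sigma> p t n d i j l $$ (r,c))"

definition Cd :: "real mat \<Rightarrow> nat \<Rightarrow> nat \<Rightarrow> nat \<Rightarrow> (nat \<Rightarrow> real) \<Rightarrow> (nat \<Rightarrow> nat \<Rightarrow> nat) \<Rightarrow> real mat" where
  "Cd \<Sigma> p t n a d = Cexp \<Sigma> p t n a d 1 1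
     - Cexp \<Sigma> p t n a d 1 2 * ginv (Cexp \<Sigma> p t n a d 2 2) * Cexp \<Sigma> p t n a d 2 1"

definition is_design :: "nat \<Rightarrow> nat \<Rightarrow> nat \<Rightarrow> (nat \<Rightarrow> nat \<Rightarrow> nat) \<Rightarrow> bool" where
  "is_design p t n d \<longleftrightarrow> (\<forall>k<p. \<forall>u<n. d k u < t)"

definition dropout_dist :: "nat \<Rightarrow> (nat \<Rightarrow> real) \<Rightarrow> bool" where
  "dropout_dist p a \<longleftrightarrow> (\<forall>k\<in>{1..p}. a k \<ge> 0) \<and> (\<Sum>k=1..p. a k) = 1"

definition perm_mat :: "nat \<Rightarrow> (nat \<Rightarrow> nat) \<Rightarrow> real mat" where
  "perm_mat t \<sigma> = mat t t (\<lambda>(i,j). if \<sigma> i = j then 1 else 0)"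

definition criterion :: "nat \<Rightarrow> (real mat \<Rightarrow> real) \<Rightarrow> bool" where
  "criterion t \<Phi> \<longleftrightarrow>
     (\<forall>A B w. nnd_mat t A \<and> nnd_mat t B \<and> 0 \<le> w \<and> w \<le> 1 \<longrightarrow>
        w * \<Phi> A + (1 - w) * \<Phi> B \<le> \<Phi> (w \<cdot>\<^sub>m A + (1 - w) \<cdot>\<^sub>m B)) \<and>
     (\<forall>C \<sigma>. nnd_mat t C \<and> \<sigma> permutes {0..<t} \<longrightarrow>
        \<Phi> (transpose_mat (perm_mat t \<sigma>) * C * perm_mat t \<sigma>) = \<Phi> C) \<and>
     (\<forall>C b b'. nnd_mat t C \<and> 0 < b \<and> b \<le> b' \<longrightarrow> \<Phi> (b \<cdot>\<^sub>m C) \<le> \<Phi> (b' \<cdot>\<^sub>m C))"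

definition phi1_optimal :: "(real mat \<Rightarrow> real) \<Rightarrow> real mat \<Rightarrow> nat \<Rightarrow> nat \<Rightarrow> nat \<Rightarrow> (nat \<Rightarrow> real)
    \<Rightarrow> (nat \<Rightarrow> nat \<Rightarrow> nat) \<Rightarrow> bool" where
  "phi1_optimal \<Phi> \<Sigma> p t n a d \<longleftrightarrow> is_design p t n d \<and>
     (\<forall>d'. is_design p t n d' \<longrightarrow> \<Phi> (Cd \<Sigma> p t n a d') \<le> \<Phi> (Cd \<Sigma> p t n a d))"

end

theory Submission
  imports Defs "Jordan_Normal_Form.Spectral_Radius"
begin

text \<open>A subject who stays \<open>k\<close> periods has observed error covariance
  \<open>\<Sigma>\<^sub>k = I\<^sub>k + \<eta>\<^sub>k 1\<^sub>k\<^sup>T + 1\<^sub>k \<eta>\<^sub>k\<^sup>T\<close>, so for every dropout pattern the covariance of all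
  observed responses is \<open>V = I + E Y\<^sup>T + Y E\<^sup>T\<close>, where \<open>Y = [MZ|MU]\<close> is the matrix of the
  period and subject effects and \<open>E\<close> only feeds into the subject columns.  For such \<open>V\<close>,
  whitening by the symmetric square root \<open>S\<close> of \<open>V\<^sup>-\<^sup>1\<close> does not change the residual
  projection: \<open>S pr\<^sup>\<bottom>(SY) S = pr\<^sup>\<bottom>(Y)\<close>.  Hence \<open>O\<^sub>\<Sigma> = O\<^sub>I\<close> for every dropout pattern,
  the information matrices of every design coincide under both models, and
  \<open>\<phi>\<^sub>1\<close>-optimality carries over for any criterion.\<close>

lemma assoc_mult_mat_dims:
  "dim_col A = dim_row B \<Longrightarrow> dim_col B = dim_row C \<Longrightarrow> A * B * C = A * (B * (C :: 'a :: semiring_0 mat))"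
  by (rule assoc_mult_mat[of _ "dim_row A" "dim_row B" _ "dim_row C" _ "dim_col C"]) auto

lemma mult_minus_distrib_mat_dims:
  "dim_col A = dim_row B \<Longrightarrow> dim_row B = dim_row C \<Longrightarrow> dim_col B = dim_col C
   \<Longrightarrow> A * (B - C) = A * B - A * (C :: 'a :: ring mat)"
  by (rule mult_minus_distrib_mat[of _ "dim_row A" "dim_row B" _ "dim_col B"]) auto

lemma minus_mult_distrib_mat_dims:
  "dim_row A = dim_row B \<Longrightarrow> dim_col A = dim_col B \<Longrightarrow> dim_col A = dim_row C
   \<Longrightarrow> (A - B) * C = A * C - B * (C :: 'a :: ring mat)"
  by (rule minus_mult_distrib_mat[of _ "dim_row A" "dim_col A" _ _ "dim_col C"]) auto

lemma mult_add_distrib_mat_dims: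
  "dim_col A = dim_row B \<Longrightarrow> dim_row B = dim_row C \<Longrightarrow> dim_col B = dim_col C
   \<Longrightarrow> A * (B + C) = A * B + A * (C :: 'a :: semiring_0 mat)"
  by (rule mult_add_distrib_mat[of _ "dim_row A" "dim_row B" _ "dim_col B"]) auto

lemma add_mult_distrib_mat_dims:
  "dim_row A = dim_row B \<Longrightarrow> dim_col A = dim_col B \<Longrightarrow> dim_col A = dim_row C
   \<Longrightarrow> (A + B) * C = A * C + B * (C :: 'a :: semiring_0 mat)"
  by (rule add_mult_distrib_mat[of _ "dim_row A" "dim_col A" _ _ "dim_col C"]) auto

lemma transpose_mult_dims:
  "dim_col A = dim_row B \<Longrightarrow> transpose_mat (A * B) = transpose_mat B * transpose_mat (A :: 'a :: comm_semiring_0 mat)"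
  by (rule transpose_mult[of _ "dim_row A" "dim_row B" _ "dim_col B"]) auto

lemma transpose_minus_dims:
  "dim_row A = dim_row B \<Longrightarrow> dim_col A = dim_col B
   \<Longrightarrow> transpose_mat (A - B) = transpose_mat A - transpose_mat (B :: 'a :: ab_group_add mat)"
  by (rule transpose_minus[of _ "dim_row A" "dim_col A"]) auto

lemma transpose_add_dims:
  "dim_row A = dim_row B \<Longrightarrow> dim_col A = dim_col B
   \<Longrightarrow> transpose_mat (A + B) = transpose_mat A + transpose_mat (B :: 'a :: ab_group_add mat)"
  by (rule transpose_add[of _ "dim_row A" "dim_col A"]) auto

text \<open>With the side conditions stated on dimensions, the simplifier can discharge them, so
  matrix identities below are proved by normalising with these rules.\<close>
lemmas mat_dims_simps = assoc_mult_mat_dims mult_minus_distrib_mat_dims minus_mult_distrib_mat_dims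
  mult_add_distrib_mat_dims add_mult_distrib_mat_dims transpose_mult_dims transpose_minus_dims
  transpose_add_dims

lemma minus_self_mat: "A - A = 0\<^sub>m (dim_row A) (dim_col (A :: 'a :: ab_group_add mat))"
  by (rule minus_r_inv_mat) auto

lemma minus_zero_mat: "dim_row A = a \<Longrightarrow> dim_col A = b \<Longrightarrow> A - 0\<^sub>m a b = (A :: 'a :: ab_group_add mat)"
  by (rule eq_matI) auto

lemma add_zero_mat: "dim_row A = a \<Longrightarrow> dim_col A = b \<Longrightarrow> A + 0\<^sub>m a b = (A :: 'a :: monoid_add mat)"
  by (rule eq_matI) auto

lemma eq_of_minus_eq_zero_mat:
  assumes "dim_row A = dim_row B" "dim_col A = dim_col B" "A - B = 0\<^sub>m a b"
  shows "A = (B :: 'a :: ab_group_add mat)"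
proof (rule eq_matI)
  fix i j assume ij: "i < dim_row B" "j < dim_col B"
  have "(A - B) $$ (i,j) = 0\<^sub>m a b $$ (i,j)" using assms(3) by simp
  also have "\<dots> = 0" using arg_cong[OF assms(3), of dim_row] arg_cong[OF assms(3), of dim_col] ij by simp
  finally have "(A - B) $$ (i,j) = 0" .
  thus "A $$ (i,j) = B $$ (i,j)" using ij by simp
qed (use assms in auto)

lemma real_scalar_prod_self_eq_0_iff:
  "v \<in> carrier_vec n \<Longrightarrow> v \<bullet> v = (0 :: real) \<longleftrightarrow> v = 0\<^sub>v n"
  using conjugate_square_eq_0_vec[of v n] by simp

lemma real_scalar_prod_self_nonneg: "0 \<le> v \<bullet> (v :: real vec)"
  using conjugate_square_ge_0_vec[of v] by simp

lemma mult_unit_vec_index: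
  "M \<in> carrier_mat n m \<Longrightarrow> i < n \<Longrightarrow> j < m \<Longrightarrow> (M *\<^sub>v unit_vec m j) $ i = (M $$ (i,j) :: 'a :: comm_ring_1)"
  by (simp add: scalar_prod_right_unit)

lemma transpose_gram_mat: "transpose_mat (transpose_mat A * A) = transpose_mat A * (A :: 'a :: comm_semiring_0 mat)"
  by (simp add: transpose_mult_dims)

lemma gram_eq_zero_imp_zero:
  fixes A :: "real mat"
  assumes A: "A \<in> carrier_mat m q" and zero: "transpose_mat A * A = 0\<^sub>m q q"
  shows "A = 0\<^sub>m m q"
proof (rule eq_matI)
  fix i j assume "i < dim_row (0\<^sub>m m q)" "j < dim_col (0\<^sub>m m q)"
  hence i: "i < m" and j: "j < q" by auto
  have "col A j \<bullet> col A j = (transpose_mat A * A) $$ (j,j)" using A j by simp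
  hence "col A j = 0\<^sub>v m" using zero j A by (simp add: real_scalar_prod_self_eq_0_iff[of _ m])
  hence "col A j $ i = 0" using i by simp
  thus "A $$ (i,j) = 0\<^sub>m m q $$ (i,j)" using A i j by simp
qed (use A in auto)

section \<open>Spectral decomposition of real symmetric matrices\<close>

lemma symmetric_eigenvalue_real:
  fixes A :: "real mat" and v :: "complex vec"
  assumes A: "A \<in> carrier_mat n n" and sym: "transpose_mat A = A"
    and v: "v \<in> carrier_vec n" "v \<noteq> 0\<^sub>v n"
    and eigen: "map_mat complex_of_real A *\<^sub>v v = k \<cdot>\<^sub>v v"
  shows "Im k = 0"
proof -
  have eigen_i: "(\<Sum>j<n. complex_of_real (A $$ (i,j)) * v $ j) = k * v $ i" if "i < n" for i
    using arg_cong[OF eigen, of "\<lambda>w. w $ i"] that A v by (auto simp: scalar_prod_def lessThan_atLeast0)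
  have A_ji: "A $$ (j,i) = A $$ (i,j)" if "i < n" "j < n" for i j
    using sym A that by (metis carrier_matD index_transpose_mat(1))
  define s where "s = (\<Sum>i<n. cnj (v $ i) * (\<Sum>j<n. complex_of_real (A $$ (i,j)) * v $ j))"
  define N where "N = (\<Sum>i<n. (cmod (v $ i))\<^sup>2)"
  have "s = k * (\<Sum>i<n. cnj (v $ i) * v $ i)"
    unfolding s_def using eigen_i by (simp add: sum_distrib_left mult.commute mult.left_commute)
  also have "(\<Sum>i<n. cnj (v $ i) * v $ i) = complex_of_real N"
    unfolding N_def of_real_sum by (intro sum.cong refl) (simp add: complex_norm_square[symmetric] mult.commute)
  finally have s_eq: "s = k * complex_of_real N" .
  text \<open>The quadratic form \<open>s = v\<^sup>* A v\<close> of a real symmetric matrix is self-conjugate.\<close>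
  have "cnj s = (\<Sum>i<n. \<Sum>j<n. complex_of_real (A $$ (i,j)) * cnj (v $ j) * v $ i)"
    unfolding s_def by (simp add: cnj_sum sum_distrib_left mult.commute mult.left_commute)
  also have "\<dots> = (\<Sum>j<n. \<Sum>i<n. complex_of_real (A $$ (i,j)) * cnj (v $ j) * v $ i)"
    by (rule sum.swap)
  also have "\<dots> = s"
    unfolding s_def by (auto simp: sum_distrib_left A_ji mult.commute mult.left_commute intro!: sum.cong)
  finally have "Im s = 0" by (metis cnj.simps(2) neg_equal_zero)
  moreover obtain i where i: "i < n" "v $ i \<noteq> 0"
    using v by (metis eq_vecI carrier_vecD index_zero_vec)
  have "N \<ge> (cmod (v $ i))\<^sup>2" unfolding N_def using i by (intro member_le_sum) auto
  hence "N > 0" using i by (smt (verit) zero_less_power2 norm_eq_zero)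
  ultimately show ?thesis using s_eq by simp
qed

lemma symmetric_real_eigenvector:
  fixes A :: "real mat"
  assumes A: "A \<in> carrier_mat n n" and sym: "transpose_mat A = A" and n: "0 < n"
  shows "\<exists>c v. v \<in> carrier_vec n \<and> v \<noteq> 0\<^sub>v n \<and> A *\<^sub>v v = c \<cdot>\<^sub>v v"
proof -
  define Ac where "Ac = map_mat complex_of_real A"
  have Ac: "Ac \<in> carrier_mat n n" using A unfolding Ac_def by auto
  obtain k where "k \<in> spectrum Ac" using spectrum_non_empty[OF Ac n] by auto
  then obtain v where "eigenvector Ac v k" unfolding spectrum_def eigenvalue_def by auto
  hence v: "v \<in> carrier_vec n" "v \<noteq> 0\<^sub>v n" and eigen: "Ac *\<^sub>v v = k \<cdot>\<^sub>v v"
    unfolding eigenvector_def using Ac by auto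
  have k: "k = complex_of_real (Re k)"
    using symmetric_eigenvalue_real[OF A sym v eigen[unfolded Ac_def]] by (simp add: complex_eq_iff)
  text \<open>Real and imaginary parts of a complex eigenvector for a real eigenvalue are real eigenvectors.\<close>
  have parts: "A *\<^sub>v vec n (\<lambda>i. f (v $ i)) = Re k \<cdot>\<^sub>v vec n (\<lambda>i. f (v $ i))"
    if f: "f = Re \<or> f = Im" for f
  proof (rule eq_vecI)
    fix i assume "i < dim_vec (Re k \<cdot>\<^sub>v vec n (\<lambda>i. f (v $ i)))"
    hence i: "i < n" by simp
    have "(\<Sum>j<n. complex_of_real (A $$ (i,j)) * v $ j) = complex_of_real (Re k) * v $ i"
      using arg_cong[OF eigen, of "\<lambda>w. w $ i"] i A v k
      by (auto simp: Ac_def scalar_prod_def lessThan_atLeast0)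
    from arg_cong[OF this, of f] f
    show "(A *\<^sub>v vec n (\<lambda>i. f (v $ i))) $ i = (Re k \<cdot>\<^sub>v vec n (\<lambda>i. f (v $ i))) $ i"
      using i A by (auto simp: Re_sum Im_sum scalar_prod_def lessThan_atLeast0)
  qed (use A in auto)
  obtain i where "i < n" "v $ i \<noteq> 0" using v by (metis eq_vecI carrier_vecD index_zero_vec)
  hence "vec n (\<lambda>i. Re (v $ i)) \<noteq> 0\<^sub>v n \<or> vec n (\<lambda>i. Im (v $ i)) \<noteq> 0\<^sub>v n"
    by (auto simp: complex_eq_iff dest!: arg_cong[of _ _ "\<lambda>w. w $ i"])
  thus ?thesis using parts[of Re] parts[of Im] by (meson vec_carrier)
qed

definition householder :: "nat \<Rightarrow> real vec \<Rightarrow> real mat" where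
  "householder n w = mat n n (\<lambda>(i,j). (if i = j then 1 else 0) - (2 / (w \<bullet> w)) * w $ i * w $ j)"

lemma householder_carrier[simp]: "householder n w \<in> carrier_mat n n"
  unfolding householder_def by auto

lemma transpose_householder: "transpose_mat (householder n w) = householder n w"
  unfolding householder_def by (rule eq_matI) auto

lemma householder_mult_vec:
  assumes w: "w \<in> carrier_vec n" and x: "x \<in> carrier_vec n"
  shows "householder n w *\<^sub>v x = x - ((2 / (w \<bullet> w)) * (w \<bullet> x)) \<cdot>\<^sub>v w"
proof (rule eq_vecI)
  fix i assume "i < dim_vec (x - ((2 / (w \<bullet> w)) * (w \<bullet> x)) \<cdot>\<^sub>v w)"
  hence i: "i < n" using x w by auto
  have "(householder n w *\<^sub>v x) $ i
      = (\<Sum>j<n. ((if i = j then 1 else 0) - (2 / (w \<bullet> w)) * w $ i * w $ j) * x $ j)"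
    using i w x by (simp add: householder_def scalar_prod_def lessThan_atLeast0)
  also have "\<dots> = (\<Sum>j<n. (if i = j then x $ j else 0)) - (\<Sum>j<n. (2 / (w \<bullet> w)) * w $ i * (w $ j * x $ j))"
    by (subst sum_subtractf[symmetric], rule sum.cong, auto simp: algebra_simps)
  also have "\<dots> = x $ i - (2 / (w \<bullet> w)) * w $ i * (\<Sum>j<n. w $ j * x $ j)"
    using i by (simp add: sum_distrib_left)
  also have "\<dots> = (x - ((2 / (w \<bullet> w)) * (w \<bullet> x)) \<cdot>\<^sub>v w) $ i"
    using i w x by (simp add: scalar_prod_def lessThan_atLeast0)
  finally show "(householder n w *\<^sub>v x) $ i = (x - ((2 / (w \<bullet> w)) * (w \<bullet> x)) \<cdot>\<^sub>v w) $ i" .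
qed (use x w in \<open>auto simp: householder_def\<close>)

lemma householder_involution_vec:
  assumes w: "w \<in> carrier_vec n" and x: "x \<in> carrier_vec n"
  shows "householder n w *\<^sub>v (householder n w *\<^sub>v x) = x"
proof -
  define c where "c = 2 / (w \<bullet> w)"
  define a where "a = c * (w \<bullet> x)"
  have ax: "x - a \<cdot>\<^sub>v w \<in> carrier_vec n" using w x by auto
  have "w \<bullet> (x - a \<cdot>\<^sub>v w) = w \<bullet> x - a * (w \<bullet> w)"
    using w x by (simp add: scalar_prod_minus_distrib)
  moreover have "c * (w \<bullet> x - a * (w \<bullet> w)) = - a"
    by (cases "w \<bullet> w = 0") (simp_all add: a_def c_def field_simps)
  ultimately have "householder n w *\<^sub>v (x - a \<cdot>\<^sub>v w) = x"
    using householder_mult_vec[OF w ax] w x unfolding c_def by (auto intro!: eq_vecI)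
  thus ?thesis using householder_mult_vec[OF w x] unfolding a_def c_def by simp
qed

lemma householder_involution:
  assumes w: "w \<in> carrier_vec n"
  shows "householder n w * householder n w = 1\<^sub>m n"
proof (rule eq_matI)
  fix i j assume "i < dim_row (1\<^sub>m n)" "j < dim_col (1\<^sub>m n)"
  hence i: "i < n" and j: "j < n" by auto
  have "(householder n w * householder n w) $$ (i,j)
      = (householder n w *\<^sub>v (householder n w *\<^sub>v unit_vec n j)) $ i"
    using mult_unit_vec_index[OF mult_carrier_mat[OF householder_carrier householder_carrier] i j]
    by (simp add: assoc_mult_mat_vec[of _ n n _ n])
  thus "(householder n w * householder n w) $$ (i,j) = 1\<^sub>m n $$ (i,j)"
    using householder_involution_vec[OF w] i j by simp
qed (auto simp: householder_def)

lemma householder_unit_vec_0: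
  assumes u: "u \<in> carrier_vec n" and uu: "u \<bullet> u = 1" and n: "0 < n"
  shows "householder n (u - unit_vec n 0) *\<^sub>v unit_vec n 0 = u"
proof (cases "u = unit_vec n 0")
  case True
  hence w0: "u - unit_vec n 0 = 0\<^sub>v n" by auto
  show ?thesis unfolding w0 using householder_mult_vec[of "0\<^sub>v n" n "unit_vec n 0"] True
    by (auto intro!: eq_vecI)
next
  case False
  define w where "w = u - unit_vec n 0"
  have w: "w \<in> carrier_vec n" using u unfolding w_def by auto
  have we: "w \<bullet> unit_vec n 0 = u $ 0 - 1"
    unfolding w_def using u n by (simp add: minus_scalar_prod_distrib)
  have e: "unit_vec n 0 \<in> carrier_vec n" by simp
  have "w \<bullet> w = u \<bullet> w - unit_vec n 0 \<bullet> w"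
    unfolding w_def by (rule minus_scalar_prod_distrib[OF u e]) (use u in simp)
  also have "u \<bullet> w = u \<bullet> u - u \<bullet> unit_vec n 0"
    unfolding w_def by (rule scalar_prod_minus_distrib[OF u u e])
  also have "unit_vec n 0 \<bullet> w = unit_vec n 0 \<bullet> u - unit_vec n 0 \<bullet> unit_vec n 0"
    unfolding w_def by (rule scalar_prod_minus_distrib[OF e u e])
  finally have "w \<bullet> w = u \<bullet> u - u \<bullet> unit_vec n 0 - (unit_vec n 0 \<bullet> u - unit_vec n 0 \<bullet> unit_vec n 0)" .
  hence "w \<bullet> w = 2 - 2 * u $ 0"
    using n u uu by (simp add: scalar_prod_left_unit scalar_prod_right_unit)
  moreover have "w \<noteq> 0\<^sub>v n"
  proof
    assume "w = 0\<^sub>v n"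
    have "u $ i = unit_vec n 0 $ i" if "i < n" for i
    proof -
      have "w $ i = 0" using \<open>w = 0\<^sub>v n\<close> that by simp
      thus ?thesis using that u unfolding w_def by simp
    qed
    thus False using False u by (auto intro!: eq_vecI)
  qed
  hence "w \<bullet> w \<noteq> 0" using real_scalar_prod_self_eq_0_iff[OF w] by simp
  ultimately have "(2 / (w \<bullet> w)) * (w \<bullet> unit_vec n 0) = -1" using we by (simp add: field_simps)
  thus ?thesis using householder_mult_vec[OF w, of "unit_vec n 0"] u unfolding w_def
    by (auto intro!: eq_vecI)
qed

definition orthonormal_mat :: "nat \<Rightarrow> real mat \<Rightarrow> bool" where
  "orthonormal_mat n P \<longleftrightarrow> P \<in> carrier_mat n n \<and> transpose_mat P * P = 1\<^sub>m n \<and> P * transpose_mat P = 1\<^sub>m n"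

definition diag_mat_of :: "nat \<Rightarrow> (nat \<Rightarrow> real) \<Rightarrow> real mat" where
  "diag_mat_of n d = mat n n (\<lambda>(i,j). if i = j then d i else 0)"

lemma diag_mat_of_carrier[simp]: "diag_mat_of n d \<in> carrier_mat n n"
  unfolding diag_mat_of_def by auto

lemma dim_diag_mat_of[simp]: "dim_row (diag_mat_of n d) = n" "dim_col (diag_mat_of n d) = n"
  unfolding diag_mat_of_def by auto

lemma transpose_diag_mat_of[simp]: "transpose_mat (diag_mat_of n d) = diag_mat_of n d"
  unfolding diag_mat_of_def by (rule eq_matI) auto

lemma diag_mat_of_mult: "diag_mat_of n f * diag_mat_of n g = diag_mat_of n (\<lambda>i. f i * g i)"
proof (rule eq_matI)
  fix i j assume "i < dim_row (diag_mat_of n (\<lambda>i. f i * g i))" "j < dim_col (diag_mat_of n (\<lambda>i. f i * g i))"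
  hence ij: "i < n" "j < n" by (auto simp: diag_mat_of_def)
  have "(diag_mat_of n f * diag_mat_of n g) $$ (i,j)
      = (\<Sum>k\<in>{0..<n}. (if i = k then f i else 0) * (if k = j then g k else 0))"
    using ij by (simp add: diag_mat_of_def scalar_prod_def)
  also have "\<dots> = (\<Sum>k\<in>{0..<n}. if k = i then (if i = j then f i * g i else 0) else 0)"
    by (rule sum.cong) auto
  finally show "(diag_mat_of n f * diag_mat_of n g) $$ (i,j) = diag_mat_of n (\<lambda>i. f i * g i) $$ (i,j)"
    using ij by (simp add: diag_mat_of_def)
qed (auto simp: diag_mat_of_def)

lemma diag_mat_of_quadratic_form:
  assumes y: "y \<in> carrier_vec n"
  shows "y \<bullet> (diag_mat_of n f *\<^sub>v y) = (\<Sum>i<n. f i * (y $ i)\<^sup>2)"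
proof -
  have "(diag_mat_of n f *\<^sub>v y) $ i = f i * y $ i" if "i < n" for i
  proof -
    have "(diag_mat_of n f *\<^sub>v y) $ i = (\<Sum>k\<in>{0..<n}. (if i = k then f i else 0) * y $ k)"
      using that y by (simp add: diag_mat_of_def scalar_prod_def)
    also have "\<dots> = (\<Sum>k\<in>{0..<n}. if k = i then f i * y $ i else 0)" by (rule sum.cong) auto
    finally show ?thesis using that by simp
  qed
  thus ?thesis
    using y by (simp add: scalar_prod_def lessThan_atLeast0 power2_eq_square mult.commute mult.left_commute)
qed

lemma orthonormal_mat_four_block:
  assumes "orthonormal_mat k P"
  shows "orthonormal_mat (Suc k) (four_block_mat (1\<^sub>m 1) (0\<^sub>m 1 k) (0\<^sub>m k 1) P)"
proof -
  have P: "P \<in> carrier_mat k k" "transpose_mat P * P = 1\<^sub>m k" "P * transpose_mat P = 1\<^sub>m k"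
    using assms unfolding orthonormal_mat_def by auto
  have PT: "transpose_mat (four_block_mat (1\<^sub>m 1) (0\<^sub>m 1 k) (0\<^sub>m k 1) P)
      = four_block_mat (1\<^sub>m 1) (0\<^sub>m 1 k) (0\<^sub>m k 1) (transpose_mat P)"
    by (rule eq_matI) (use P in auto)
  have blocks: "1\<^sub>m 1 \<in> carrier_mat 1 1" "0\<^sub>m 1 k \<in> carrier_mat 1 k" "0\<^sub>m k 1 \<in> carrier_mat k 1"
    "transpose_mat P \<in> carrier_mat k k" using P by auto
  have "transpose_mat (four_block_mat (1\<^sub>m 1) (0\<^sub>m 1 k) (0\<^sub>m k 1) P) * four_block_mat (1\<^sub>m 1) (0\<^sub>m 1 k) (0\<^sub>m k 1) P
      = 1\<^sub>m (1 + k)"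
    unfolding PT by (subst mult_four_block_mat[OF blocks blocks(1-3) P(1)]) (use P in auto)
  moreover have "four_block_mat (1\<^sub>m 1) (0\<^sub>m 1 k) (0\<^sub>m k 1) P * transpose_mat (four_block_mat (1\<^sub>m 1) (0\<^sub>m 1 k) (0\<^sub>m k 1) P)
      = 1\<^sub>m (1 + k)"
    unfolding PT by (subst mult_four_block_mat[OF blocks(1-3) P(1) blocks]) (use P in auto)
  ultimately show ?thesis unfolding orthonormal_mat_def using P by auto
qed

lemma orthonormal_mat_mult:
  assumes "orthonormal_mat n P" "orthonormal_mat n Q"
  shows "orthonormal_mat n (P * Q)"
proof -
  have P: "P \<in> carrier_mat n n" "transpose_mat P * P = 1\<^sub>m n" "P * transpose_mat P = 1\<^sub>m n"
    and Q: "Q \<in> carrier_mat n n" "transpose_mat Q * Q = 1\<^sub>m n" "Q * transpose_mat Q = 1\<^sub>m n"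
    using assms unfolding orthonormal_mat_def by auto
  have "transpose_mat (P * Q) * (P * Q) = transpose_mat Q * ((transpose_mat P * P) * Q)"
    using P(1) Q(1) by (simp add: mat_dims_simps)
  also have "\<dots> = 1\<^sub>m n" using P Q by (simp only: left_mult_one_mat)
  finally have left: "transpose_mat (P * Q) * (P * Q) = 1\<^sub>m n" .
  have "P * Q * transpose_mat (P * Q) = P * ((Q * transpose_mat Q) * transpose_mat P)"
    using P(1) Q(1) by (simp add: mat_dims_simps)
  also have "\<dots> = 1\<^sub>m n" using P Q by (simp add: left_mult_one_mat[of "transpose_mat P" n n])
  finally show ?thesis using P Q left unfolding orthonormal_mat_def by simp
qed

lemma symmetric_unit_eigenvector:
  fixes A :: "real mat"
  assumes A: "A \<in> carrier_mat n n" and sym: "transpose_mat A = A" and n: "0 < n"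
  shows "\<exists>c u. u \<in> carrier_vec n \<and> u \<bullet> u = 1 \<and> A *\<^sub>v u = c \<cdot>\<^sub>v u"
proof -
  obtain c v where v: "v \<in> carrier_vec n" "v \<noteq> 0\<^sub>v n" and Av: "A *\<^sub>v v = c \<cdot>\<^sub>v v"
    using symmetric_real_eigenvector[OF A sym n] by auto
  have vv: "v \<bullet> v > 0"
    using real_scalar_prod_self_eq_0_iff[OF v(1)] real_scalar_prod_self_nonneg[of v] v(2) by simp
  define u where "u = (1 / sqrt (v \<bullet> v)) \<cdot>\<^sub>v v"
  have "u \<bullet> u = 1" unfolding u_def using v vv
    by (simp add: smult_scalar_prod_distrib[OF _ v(1)] scalar_prod_smult_distrib[OF v(1) v(1)]
        power2_eq_square[symmetric])
  moreover have "A *\<^sub>v u = c \<cdot>\<^sub>v u" unfolding u_def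
    using mult_mat_vec[OF A v(1)] Av v by (auto intro!: eq_vecI)
  moreover have "u \<in> carrier_vec n" unfolding u_def using v by simp
  ultimately show ?thesis by blast
qed

text \<open>Deflation: a Householder reflection mapping \<open>e\<^sub>0\<close> to a unit eigenvector splits off
  a \<open>1 \<times> 1\<close> block.\<close>
lemma symmetric_householder_deflation:
  fixes A :: "real mat"
  assumes A: "A \<in> carrier_mat (Suc k) (Suc k)" and sym: "transpose_mat A = A"
  shows "\<exists>H c A'. orthonormal_mat (Suc k) H \<and> transpose_mat H = H \<and> A' \<in> carrier_mat k k
    \<and> transpose_mat A' = A' \<and> H * A * H = four_block_mat (mat 1 1 (\<lambda>_. c)) (0\<^sub>m 1 k) (0\<^sub>m k 1) A'"
proof -
  define n where "n = Suc k"
  have A: "A \<in> carrier_mat n n" and n: "0 < n" using A unfolding n_def by auto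
  obtain c u where u: "u \<in> carrier_vec n" and uu: "u \<bullet> u = 1" and Au: "A *\<^sub>v u = c \<cdot>\<^sub>v u"
    using symmetric_unit_eigenvector[OF A sym n] by auto
  define H where "H = householder n (u - unit_vec n 0)"
  have w: "u - unit_vec n 0 \<in> carrier_vec n" using u by simp
  have H: "H \<in> carrier_mat n n" "transpose_mat H = H" "H * H = 1\<^sub>m n"
    unfolding H_def using transpose_householder householder_involution[OF w] by auto
  have He: "H *\<^sub>v unit_vec n 0 = u" unfolding H_def by (rule householder_unit_vec_0[OF u uu n])
  have Hu: "H *\<^sub>v u = unit_vec n 0"
    using householder_involution_vec[OF w, of "unit_vec n 0"] He unfolding H_def by simp
  define B where "B = H * A * H"
  have B: "B \<in> carrier_mat n n" unfolding B_def using H A by auto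
  have symB: "transpose_mat B = B" unfolding B_def using H(1,2) A sym by (simp add: mat_dims_simps)
  have "B *\<^sub>v unit_vec n 0 = c \<cdot>\<^sub>v unit_vec n 0"
    unfolding B_def using H A He Au Hu mult_mat_vec[OF H(1) u] by (simp add: assoc_mult_mat_vec[of _ n n _ n])
  hence B_col0: "B $$ (i,0) = (if i = 0 then c else 0)" if "i < n" for i
    using mult_unit_vec_index[OF B that n] that n by auto
  have B_row0: "B $$ (0,j) = (if j = 0 then c else 0)" if "j < n" for j
    using B_col0[OF that] symB B that n by (metis carrier_matD index_transpose_mat(1))
  define A' where "A' = mat k k (\<lambda>(i,j). B $$ (Suc i, Suc j))"
  have symA': "transpose_mat A' = A'"
  proof (rule eq_matI)
    fix i j assume "i < dim_row A'" "j < dim_col A'"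
    hence ij: "i < k" "j < k" unfolding A'_def by auto
    have "B $$ (Suc j, Suc i) = transpose_mat B $$ (Suc i, Suc j)" using B ij unfolding n_def by simp
    thus "transpose_mat A' $$ (i,j) = A' $$ (i,j)" using ij symB unfolding A'_def by simp
  qed (auto simp: A'_def)
  have "B = four_block_mat (mat 1 1 (\<lambda>_. c)) (0\<^sub>m 1 k) (0\<^sub>m k 1) A'"
  proof (rule eq_matI)
    fix i j assume "i < dim_row (four_block_mat (mat 1 1 (\<lambda>_. c)) (0\<^sub>m 1 k) (0\<^sub>m k 1) A')"
      "j < dim_col (four_block_mat (mat 1 1 (\<lambda>_. c)) (0\<^sub>m 1 k) (0\<^sub>m k 1) A')"
    hence i: "i < n" and j: "j < n" unfolding A'_def n_def by auto
    show "B $$ (i,j) = four_block_mat (mat 1 1 (\<lambda>_. c)) (0\<^sub>m 1 k) (0\<^sub>m k 1) A' $$ (i,j)"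
    proof (cases "i = 0 \<or> j = 0")
      case True thus ?thesis using i j B_col0 B_row0 unfolding A'_def n_def by auto
    next
      case False
      then obtain i' j' where "i = Suc i'" "j = Suc j'" by (metis not0_implies_Suc)
      thus ?thesis using i j unfolding A'_def n_def by simp
    qed
  qed (use B in \<open>auto simp: A'_def n_def\<close>)
  moreover have "orthonormal_mat n H" unfolding orthonormal_mat_def using H by simp
  ultimately show ?thesis using H(2) symA'
    by (intro exI[of _ H] exI[of _ c] exI[of _ A']) (simp add: B_def n_def A'_def)
qed

lemma involution_conj_cancel:
  fixes H A :: "real mat"
  assumes H: "H \<in> carrier_mat n n" "H * H = 1\<^sub>m n" and A: "A \<in> carrier_mat n n"
  shows "H * (H * A * H) * H = A"
proof -
  have "H * (H * A * H) * H = (H * H) * A * (H * H)" using H(1) A by (simp add: mat_dims_simps)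
  also have "\<dots> = A" using H by (simp add: left_mult_one_mat[OF A] right_mult_one_mat[OF A])
  finally show ?thesis .
qed

theorem real_symmetric_spectral_decomposition:
  fixes A :: "real mat"
  assumes "A \<in> carrier_mat n n" "transpose_mat A = A"
  shows "\<exists>P d. orthonormal_mat n P \<and> A = P * diag_mat_of n d * transpose_mat P"
  using assms
proof (induction n arbitrary: A)
  case 0
  thus ?case unfolding orthonormal_mat_def
    by (intro exI[of _ "1\<^sub>m 0"] exI[of _ "\<lambda>_. 0"]) (auto intro!: eq_matI)
next
  case (Suc k A)
  obtain H c A' where H: "orthonormal_mat (Suc k) H" "transpose_mat H = H"
    and A': "A' \<in> carrier_mat k k" "transpose_mat A' = A'"
    and HAH: "H * A * H = four_block_mat (mat 1 1 (\<lambda>_. c)) (0\<^sub>m 1 k) (0\<^sub>m k 1) A'"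
    using symmetric_householder_deflation[OF Suc.prems] by blast
  obtain P' d' where P': "orthonormal_mat k P'" and A'_eq: "A' = P' * diag_mat_of k d' * transpose_mat P'"
    using Suc.IH[OF A'] by blast
  define Q where "Q = four_block_mat (1\<^sub>m 1) (0\<^sub>m 1 k) (0\<^sub>m k 1) P'"
  define d where "d = (\<lambda>i. if i = 0 then c else d' (i - 1))"
  have Q: "orthonormal_mat (Suc k) Q" unfolding Q_def by (rule orthonormal_mat_four_block[OF P'])
  hence Qc: "Q \<in> carrier_mat (Suc k) (Suc k)" unfolding orthonormal_mat_def by simp
  have Pc: "P' \<in> carrier_mat k k" using P' unfolding orthonormal_mat_def by simp
  have blocks: "1\<^sub>m 1 \<in> carrier_mat 1 1" "0\<^sub>m 1 k \<in> carrier_mat 1 k" "0\<^sub>m k 1 \<in> carrier_mat k 1"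
    "mat 1 1 (\<lambda>_. c) \<in> carrier_mat 1 1" "transpose_mat P' \<in> carrier_mat k k"
    "P' * diag_mat_of k d' \<in> carrier_mat k k" using Pc by auto
  have D: "diag_mat_of (Suc k) d = four_block_mat (mat 1 1 (\<lambda>_. c)) (0\<^sub>m 1 k) (0\<^sub>m k 1) (diag_mat_of k d')"
    by (rule eq_matI) (auto simp: diag_mat_of_def d_def)
  have QT: "transpose_mat Q = four_block_mat (1\<^sub>m 1) (0\<^sub>m 1 k) (0\<^sub>m k 1) (transpose_mat P')"
    unfolding Q_def by (rule eq_matI) (use Pc in auto)
  have QD: "Q * diag_mat_of (Suc k) d
      = four_block_mat (mat 1 1 (\<lambda>_. c)) (0\<^sub>m 1 k) (0\<^sub>m k 1) (P' * diag_mat_of k d')"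
    unfolding D Q_def
    by (subst mult_four_block_mat[OF blocks(1-3) Pc blocks(4,2,3) diag_mat_of_carrier]) (use Pc in auto)
  have QDQ: "Q * diag_mat_of (Suc k) d * transpose_mat Q
      = four_block_mat (mat 1 1 (\<lambda>_. c)) (0\<^sub>m 1 k) (0\<^sub>m k 1) A'"
    unfolding QD QT A'_eq
    by (subst mult_four_block_mat[OF blocks(4,2,3,6) blocks(1-3,5)]) (use Pc in auto)
  have Hc: "H \<in> carrier_mat (Suc k) (Suc k)" "H * H = 1\<^sub>m (Suc k)"
    using H unfolding orthonormal_mat_def by metis+
  have "A = H * (H * A * H) * H"
    by (rule involution_conj_cancel[OF Hc Suc.prems(1), symmetric])
  also have "\<dots> = H * (Q * diag_mat_of (Suc k) d * transpose_mat Q) * H"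
    unfolding HAH QDQ ..
  also have "\<dots> = (H * Q) * diag_mat_of (Suc k) d * transpose_mat (H * Q)"
    using Hc(1) H(2) Qc by (simp add: mat_dims_simps)
  finally show ?case using orthonormal_mat_mult[OF H(1) Q] by blast
qed

lemma quadratic_form_conj:
  fixes P D :: "real mat"
  assumes P: "P \<in> carrier_mat n n" and D: "D \<in> carrier_mat n n" and v: "v \<in> carrier_vec n"
  shows "v \<bullet> (P * D * transpose_mat P *\<^sub>v v) = (transpose_mat P *\<^sub>v v) \<bullet> (D *\<^sub>v (transpose_mat P *\<^sub>v v))"
proof -
  have "P * D * transpose_mat P *\<^sub>v v = P *\<^sub>v (D *\<^sub>v (transpose_mat P *\<^sub>v v))"
    using P D v by (simp add: assoc_mult_mat_vec[of _ n n _ n])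
  thus ?thesis
    using transpose_vec_mult_scalar[OF P _ v, of "D *\<^sub>v (transpose_mat P *\<^sub>v v)"] P D v by simp
qed

lemma nnd_spectral_nonneg:
  assumes A: "nnd_mat n A" and P: "orthonormal_mat n P" and A_eq: "A = P * diag_mat_of n d * transpose_mat P"
    and i: "i < n"
  shows "d i \<ge> 0"
proof -
  have Pc: "P \<in> carrier_mat n n" "transpose_mat P \<in> carrier_mat n n"
    and PTP: "transpose_mat P * P = 1\<^sub>m n" using P unfolding orthonormal_mat_def by auto
  define v where "v = P *\<^sub>v unit_vec n i"
  have v: "v \<in> carrier_vec n" unfolding v_def using Pc by simp
  have "transpose_mat P *\<^sub>v v = unit_vec n i"
    unfolding v_def using PTP Pc by (simp add: assoc_mult_mat_vec[of _ n n _ n, symmetric])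
  hence "v \<bullet> (A *\<^sub>v v) = (\<Sum>k<n. d k * (unit_vec n i $ k)\<^sup>2)"
    unfolding A_eq quadratic_form_conj[OF Pc(1) diag_mat_of_carrier v]
    by (simp add: diag_mat_of_quadratic_form)
  also have "\<dots> = (\<Sum>k<n. if k = i then d i else 0)" by (rule sum.cong) (auto simp: unit_vec_def)
  also have "\<dots> = d i" using i by simp
  finally show ?thesis using A v unfolding nnd_mat_def by auto
qed

lemma nnd_sqrt_exists:
  assumes A: "nnd_mat n A"
  shows "\<exists>S. nnd_mat n S \<and> S * S = A"
proof -
  have Ac: "A \<in> carrier_mat n n" and sym: "transpose_mat A = A" using A unfolding nnd_mat_def by auto
  obtain P d where P: "orthonormal_mat n P" and A_eq: "A = P * diag_mat_of n d * transpose_mat P"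
    using real_symmetric_spectral_decomposition[OF Ac sym] by auto
  have Pc: "P \<in> carrier_mat n n" "transpose_mat P \<in> carrier_mat n n"
    and PTP: "transpose_mat P * P = 1\<^sub>m n" using P unfolding orthonormal_mat_def by auto
  have d_nonneg: "d i \<ge> 0" if "i < n" for i by (rule nnd_spectral_nonneg[OF A P A_eq that])
  define D where "D = diag_mat_of n (\<lambda>i. sqrt (d i))"
  define S where "S = P * D * transpose_mat P"
  have S: "S \<in> carrier_mat n n" unfolding S_def D_def using Pc by auto
  have "nnd_mat n S" unfolding nnd_mat_def
  proof (intro conjI ballI S)
    show "transpose_mat S = S" unfolding S_def D_def using Pc by (simp add: mat_dims_simps)
    fix v :: "real vec" assume v: "v \<in> carrier_vec n"
    have y: "transpose_mat P *\<^sub>v v \<in> carrier_vec n" using Pc v by simp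
    show "v \<bullet> (S *\<^sub>v v) \<ge> 0"
      unfolding S_def D_def quadratic_form_conj[OF Pc(1) diag_mat_of_carrier v] diag_mat_of_quadratic_form[OF y]
      using d_nonneg by (intro sum_nonneg) simp
  qed
  moreover have "S * S = A"
  proof -
    have "S * S = P * (D * (transpose_mat P * P) * D) * transpose_mat P"
      unfolding S_def D_def using Pc by (simp add: mat_dims_simps)
    also have "D * (transpose_mat P * P) * D = diag_mat_of n d"
    proof -
      have "diag_mat_of n (\<lambda>i. sqrt (d i) * sqrt (d i)) = diag_mat_of n d"
        by (rule eq_matI) (auto simp: diag_mat_of_def d_nonneg)
      thus ?thesis unfolding PTP D_def right_mult_one_mat[OF diag_mat_of_carrier] diag_mat_of_mult .
    qed
    finally show ?thesis unfolding A_eq .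
  qed
  ultimately show ?thesis by blast
qed

lemma symmetric_ginv_exists:
  fixes A :: "real mat"
  assumes A: "A \<in> carrier_mat n n" and sym: "transpose_mat A = A"
  shows "\<exists>G. G \<in> carrier_mat n n \<and> A * G * A = A"
proof -
  obtain P d where P: "orthonormal_mat n P" and A_eq: "A = P * diag_mat_of n d * transpose_mat P"
    using real_symmetric_spectral_decomposition[OF A sym] by auto
  have Pc: "P \<in> carrier_mat n n" "transpose_mat P \<in> carrier_mat n n"
    and PTP: "transpose_mat P * P = 1\<^sub>m n" using P unfolding orthonormal_mat_def by auto
  define e where "e = (\<lambda>i. if d i = 0 then 0 else 1 / d i)"
  define G where "G = P * diag_mat_of n e * transpose_mat P"
  have de: "diag_mat_of n (\<lambda>i. d i * e i * d i) = diag_mat_of n d"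
    by (rule arg_cong[where f = "diag_mat_of n"]) (auto simp: e_def)
  have "A * G * A = P * (diag_mat_of n d * (transpose_mat P * P) * diag_mat_of n e
      * (transpose_mat P * P) * diag_mat_of n d) * transpose_mat P"
    unfolding A_eq G_def using Pc by (simp add: mat_dims_simps)
  also have "diag_mat_of n d * (transpose_mat P * P) * diag_mat_of n e * (transpose_mat P * P) * diag_mat_of n d
      = diag_mat_of n d"
    unfolding PTP right_mult_one_mat[OF diag_mat_of_carrier] diag_mat_of_mult by (rule de)
  finally have "A * G * A = A" unfolding A_eq .
  moreover have "G \<in> carrier_mat n n" unfolding G_def using Pc by auto
  ultimately show ?thesis by blast
qed

lemma msqrt:
  assumes "nnd_mat n A"
  shows "nnd_mat n (msqrt A)" "msqrt A * msqrt A = A"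
proof -
  have "dim_row A = n" using assms unfolding nnd_mat_def by auto
  with someI_ex[OF nnd_sqrt_exists[OF assms]]
  show "nnd_mat n (msqrt A)" "msqrt A * msqrt A = A" unfolding msqrt_def by auto
qed

lemma ginv:
  assumes "A \<in> carrier_mat n n" "transpose_mat A = A"
  shows "ginv A \<in> carrier_mat n n" "A * ginv A * A = A"
proof -
  have "dim_row A = n" "dim_col A = n" using assms by auto
  with someI_ex[OF symmetric_ginv_exists[OF assms]]
  show "ginv A \<in> carrier_mat n n" "A * ginv A * A = A" unfolding ginv_def by auto
qed

lemma pd_imp_nnd:
  assumes "pd_mat n A"
  shows "nnd_mat n A"
  unfolding nnd_mat_def
proof (intro conjI ballI)
  show A: "A \<in> carrier_mat n n" "transpose_mat A = A" using assms unfolding pd_mat_def by auto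
  fix v :: "real vec" assume v: "v \<in> carrier_vec n"
  show "v \<bullet> (A *\<^sub>v v) \<ge> 0"
    using assms v A(1) unfolding pd_mat_def by (cases "v = 0\<^sub>v n") (auto simp: less_imp_le)
qed

lemma pd_invertible:
  assumes pd: "pd_mat n A"
  shows "\<exists>B. B \<in> carrier_mat n n \<and> A * B = 1\<^sub>m n \<and> B * A = 1\<^sub>m n"
proof -
  have A: "A \<in> carrier_mat n n" using pd unfolding pd_mat_def by auto
  have "det A \<noteq> 0"
  proof
    assume "det A = 0"
    then obtain v where "v \<in> carrier_vec n" "v \<noteq> 0\<^sub>v n" "A *\<^sub>v v = 0\<^sub>v n"
      using det_0_iff_vec_prod_zero[OF A] by auto
    thus False using pd unfolding pd_mat_def by fastforce
  qed
  from det_non_zero_imp_unit[OF A this, of "()"]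
  show ?thesis unfolding Units_def by (auto simp: ring_mat_simps)
qed

lemma minv:
  assumes "pd_mat n A"
  shows "minv A \<in> carrier_mat n n" "A * minv A = 1\<^sub>m n" "minv A * A = 1\<^sub>m n"
proof -
  have "dim_row A = n" using assms unfolding pd_mat_def by auto
  with someI_ex[OF pd_invertible[OF assms]]
  show "minv A \<in> carrier_mat n n" "A * minv A = 1\<^sub>m n" "minv A * A = 1\<^sub>m n" unfolding minv_def by auto
qed

lemma gram_nnd:
  fixes R :: "real mat"
  assumes R: "R \<in> carrier_mat a b"
  shows "nnd_mat b (transpose_mat R * R)"
  unfolding nnd_mat_def
proof (intro conjI ballI)
  show "transpose_mat R * R \<in> carrier_mat b b" using R by auto
  show "transpose_mat (transpose_mat R * R) = transpose_mat R * R" by (rule transpose_gram_mat)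
  fix v :: "real vec" assume v: "v \<in> carrier_vec b"
  have "transpose_mat R * R *\<^sub>v v = transpose_mat R *\<^sub>v (R *\<^sub>v v)"
    using R v by (simp add: assoc_mult_mat_vec[of _ b a _ b])
  moreover have "(transpose_mat (transpose_mat R) *\<^sub>v v) \<bullet> (R *\<^sub>v v) = v \<bullet> (transpose_mat R *\<^sub>v (R *\<^sub>v v))"
    by (rule transpose_vec_mult_scalar[of "transpose_mat R" b a]) (use R v in auto)
  ultimately have "v \<bullet> (transpose_mat R * R *\<^sub>v v) = (R *\<^sub>v v) \<bullet> (R *\<^sub>v v)" by simp
  thus "v \<bullet> (transpose_mat R * R *\<^sub>v v) \<ge> 0" by (simp add: real_scalar_prod_self_nonneg)
qed

section \<open>Residual projections\<close>

lemma gram_ginv_absorb_right: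
  fixes B G :: "real mat"
  assumes B: "B \<in> carrier_mat m q" and G: "G \<in> carrier_mat q q"
    and g: "transpose_mat B * B * G * (transpose_mat B * B) = transpose_mat B * B"
  shows "B * (G * (transpose_mat B * B)) = B"
proof -
  have d: "dim_row B = m" "dim_col B = q" "dim_row G = q" "dim_col G = q" using B G by auto
  define X where "X = B * (G * (transpose_mat B * B)) - B"
  have X: "X \<in> carrier_mat m q" unfolding X_def using B G by auto
  have "transpose_mat B * (B * (G * (transpose_mat B * B))) = transpose_mat B * B"
    using g d by (simp add: mat_dims_simps)
  hence "transpose_mat X * X = 0\<^sub>m q q"
    unfolding X_def using d by (simp add: mat_dims_simps minus_self_mat)
  hence "X = 0\<^sub>m m q" by (rule gram_eq_zero_imp_zero[OF X])
  thus ?thesis unfolding X_def by (rule eq_of_minus_eq_zero_mat[rotated 2]) (use d in auto)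
qed

lemma gram_ginv_absorb_left:
  fixes B G :: "real mat"
  assumes B: "B \<in> carrier_mat m q" and G: "G \<in> carrier_mat q q"
    and g: "transpose_mat B * B * G * (transpose_mat B * B) = transpose_mat B * B"
  shows "transpose_mat B * (B * (G * transpose_mat B)) = transpose_mat B"
proof -
  have d: "dim_row B = m" "dim_col B = q" "dim_row G = q" "dim_col G = q" using B G by auto
  have "transpose_mat (transpose_mat B * B * G * (transpose_mat B * B)) = transpose_mat (transpose_mat B * B)"
    using g by simp
  hence "transpose_mat B * B * transpose_mat G * (transpose_mat B * B) = transpose_mat B * B"
    using d by (simp add: mat_dims_simps)
  hence "B * (transpose_mat G * (transpose_mat B * B)) = B"
    using gram_ginv_absorb_right[OF B] G by simp
  hence "transpose_mat (B * (transpose_mat G * (transpose_mat B * B))) = transpose_mat B" by simp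
  thus ?thesis using d by (simp add: mat_dims_simps)
qed

lemma whitened_residual_annihilates:
  fixes S Y G :: "real mat"
  assumes S: "S \<in> carrier_mat m m" and ST: "transpose_mat S = S" and Y: "Y \<in> carrier_mat m q"
    and G: "G \<in> carrier_mat q q"
    and g: "transpose_mat (S * Y) * (S * Y) * G * (transpose_mat (S * Y) * (S * Y))
      = transpose_mat (S * Y) * (S * Y)"
  defines "K \<equiv> S * (1\<^sub>m m - (S * Y) * G * transpose_mat (S * Y)) * S"
  shows "K * Y = 0\<^sub>m m q" "transpose_mat Y * K = 0\<^sub>m q m"
proof -
  define B where "B = S * Y"
  have B: "B \<in> carrier_mat m q" unfolding B_def using S Y by auto
  have d: "dim_row S = m" "dim_col S = m" "dim_row Y = m" "dim_col Y = q"
    "dim_row G = q" "dim_col G = q" "dim_row B = m" "dim_col B = q"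
    using S Y G B by auto
  have K_eq: "K = S * S - S * (B * (G * (transpose_mat B * S)))"
    unfolding K_def B_def[symmetric] using d by (simp add: mat_dims_simps)
  have B_absorb: "B * (G * (transpose_mat B * B)) = B"
    using gram_ginv_absorb_right[OF B G g[folded B_def]] .
  have BT_absorb: "transpose_mat B * (B * (G * (transpose_mat B * X))) = transpose_mat B * X"
    if "dim_row X = m" for X
  proof -
    have "transpose_mat B * (B * (G * transpose_mat B)) * X = transpose_mat B * X"
      using gram_ginv_absorb_left[OF B G g[folded B_def]] by simp
    thus ?thesis using d that by (simp add: mat_dims_simps)
  qed
  have BT: "transpose_mat B = transpose_mat Y * S" unfolding B_def using d ST by (simp add: mat_dims_simps)
  have YT_S: "transpose_mat Y * (S * X) = transpose_mat B * X" if "dim_row X = m" for X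
    unfolding BT using d that by (simp add: mat_dims_simps)
  have S_Y: "S * (Y * X) = B * X" if "dim_row X = q" for X
    unfolding B_def using d that by (simp add: mat_dims_simps)
  show "K * Y = 0\<^sub>m m q"
    unfolding K_eq using d B_absorb by (simp add: mat_dims_simps S_Y B_def[symmetric] minus_self_mat)
  show "transpose_mat Y * K = 0\<^sub>m q m"
    unfolding K_eq using d BT_absorb by (simp add: mat_dims_simps YT_S minus_self_mat)
qed

text \<open>Whitening by \<open>S\<close> with \<open>S\<^sup>2 = V\<^sup>-\<^sup>1\<close> leaves the residual projection unchanged as
  long as the perturbation \<open>V - I\<close> is symmetric and lies in the column space of \<open>Y\<close>:
  on the range of \<open>I - Y G\<^sub>2 Y\<^sup>T\<close> the matrix \<open>V\<close> then acts as the identity.\<close>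
lemma weighted_residual_projection_eq:
  fixes S V Y E G1 G2 :: "real mat"
  assumes S: "S \<in> carrier_mat m m" and ST: "transpose_mat S = S"
    and V: "V \<in> carrier_mat m m" and VS: "V * (S * S) = 1\<^sub>m m"
    and Y: "Y \<in> carrier_mat m q" and E: "E \<in> carrier_mat m q"
    and V_eq: "V = 1\<^sub>m m + E * transpose_mat Y + Y * transpose_mat E"
    and G1: "G1 \<in> carrier_mat q q"
    and g1: "transpose_mat (S * Y) * (S * Y) * G1 * (transpose_mat (S * Y) * (S * Y))
      = transpose_mat (S * Y) * (S * Y)"
    and G2: "G2 \<in> carrier_mat q q"
    and g2: "transpose_mat Y * Y * G2 * (transpose_mat Y * Y) = transpose_mat Y * Y"
  shows "S * (1\<^sub>m m - (S * Y) * G1 * transpose_mat (S * Y)) * S = 1\<^sub>m m - Y * G2 * transpose_mat Y"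
    (is "?K = ?Q")
proof -
  define B where "B = S * Y"
  have d: "dim_row S = m" "dim_col S = m" "dim_row V = m" "dim_col V = m"
    "dim_row Y = m" "dim_col Y = q" "dim_row E = m" "dim_col E = q"
    "dim_row G1 = q" "dim_col G1 = q" "dim_row G2 = q" "dim_col G2 = q" "dim_row B = m" "dim_col B = q"
    using S V Y E G1 G2 unfolding B_def by auto
  define K where "K = ?K"
  have dK: "dim_row K = m" "dim_col K = m" unfolding K_def using d by auto
  have K_Y: "K * Y = 0\<^sub>m m q" and YT_K: "transpose_mat Y * K = 0\<^sub>m q m"
    unfolding K_def using whitened_residual_annihilates[OF S ST Y G1 g1] by auto
  have S_Y: "S * (Y * X) = B * X" if "dim_row X = q" for X
    unfolding B_def using d that by (simp add: mat_dims_simps)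
  have V_SS: "V * (S * (S * X)) = X" if "dim_row X = m" for X
  proof -
    have "V * (S * S) * X = X" using VS that by simp
    thus ?thesis using d that by (simp add: mat_dims_simps)
  qed
  define Q where "Q = 1\<^sub>m m - Y * (G2 * transpose_mat Y)"
  have dQ: "dim_row Q = m" "dim_col Q = m" unfolding Q_def using d by auto
  have rhs: "?Q = Q" unfolding Q_def using d by (simp add: mat_dims_simps)
  have Q_Y: "Q * (Y * X) = 0\<^sub>m m (dim_col X)" if "dim_row X = q" for X
  proof -
    have "Q * Y = 0\<^sub>m m q"
      unfolding Q_def using d gram_ginv_absorb_right[OF Y G2 g2] by (simp add: mat_dims_simps minus_self_mat)
    hence "Q * Y * X = 0\<^sub>m m (dim_col X)" using that by simp
    thus ?thesis using d dQ that by (simp add: mat_dims_simps)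
  qed
  have Q_K: "Q * K = K" unfolding Q_def using d dK YT_K by (simp add: mat_dims_simps minus_zero_mat)
  have "V * K = 1\<^sub>m m - Y * (G1 * (transpose_mat B * S))"
    unfolding K_def B_def[symmetric] using d V_SS VS by (simp add: mat_dims_simps S_Y[symmetric])
  hence "Q * (V * K) = Q" using d dQ Q_Y by (simp add: mat_dims_simps minus_zero_mat)
  moreover have "Q * (V * K) = K"
  proof -
    have "V * K = K + E * (transpose_mat Y * K) + Y * (transpose_mat E * K)"
      unfolding V_eq using d dK by (simp add: mat_dims_simps)
    also have "\<dots> = K + Y * (transpose_mat E * K)" using YT_K d dK by (simp add: add_zero_mat)
    finally have "Q * (V * K) = Q * K + Q * (Y * (transpose_mat E * K))"
      using d dK dQ by (simp add: mat_dims_simps)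
    thus ?thesis using Q_K Q_Y d dK by (simp add: add_zero_mat)
  qed
  ultimately have "K = Q" by simp
  thus ?thesis unfolding K_def rhs .
qed

lemma pr_perp_weighted_eq:
  fixes S V Y E :: "real mat"
  assumes S: "S \<in> carrier_mat m m" "transpose_mat S = S"
    and V: "V \<in> carrier_mat m m" "V * (S * S) = 1\<^sub>m m"
    and Y: "Y \<in> carrier_mat m q" and E: "E \<in> carrier_mat m q"
    and V_eq: "V = 1\<^sub>m m + E * transpose_mat Y + Y * transpose_mat E"
  shows "S * pr_perp (S * Y) * S = pr_perp Y"
proof -
  have SY: "S * Y \<in> carrier_mat m q" using S Y by auto
  have g1: "ginv (transpose_mat (S * Y) * (S * Y)) \<in> carrier_mat q q"
    "transpose_mat (S * Y) * (S * Y) * ginv (transpose_mat (S * Y) * (S * Y)) * (transpose_mat (S * Y) * (S * Y))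
     = transpose_mat (S * Y) * (S * Y)"
    using ginv[of "transpose_mat (S * Y) * (S * Y)" q] SY by (auto simp: transpose_gram_mat)
  have g2: "ginv (transpose_mat Y * Y) \<in> carrier_mat q q"
    "transpose_mat Y * Y * ginv (transpose_mat Y * Y) * (transpose_mat Y * Y) = transpose_mat Y * Y"
    using ginv[of "transpose_mat Y * Y" q] Y by (auto simp: transpose_gram_mat)
  have dims: "dim_row (S * Y) = m" "dim_row Y = m" using S(1) Y by auto
  show ?thesis unfolding pr_perp_def dims
    by (rule weighted_residual_projection_eq[OF S V Y E V_eq g1 g2])
qed

section \<open>Block-diagonal matrices\<close>

lemma dim_diag_block_mat_map:
  "dim_row (diag_block_mat (map f xs)) = (\<Sum>x\<leftarrow>xs. dim_row (f x))"
  "dim_col (diag_block_mat (map f xs)) = (\<Sum>x\<leftarrow>xs. dim_col (f x))"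
  by (simp_all add: dim_diag_block_mat o_def)

lemma diag_block_mat_mult:
  assumes "\<forall>x\<in>set xs. dim_col (f x) = dim_row (g x)"
  shows "diag_block_mat (map f xs) * diag_block_mat (map g xs) = diag_block_mat (map (\<lambda>x. f x * (g x :: real mat)) xs)"
  using assms
proof (induction xs)
  case Nil thus ?case by (auto intro!: eq_matI)
next
  case (Cons x xs)
  define D1 where "D1 = diag_block_mat (map f xs)"
  define D2 where "D2 = diag_block_mat (map g xs)"
  have IH: "D1 * D2 = diag_block_mat (map (\<lambda>x. f x * g x) xs)" using Cons unfolding D1_def D2_def by auto
  have eq: "dim_col D1 = dim_row D2" unfolding D1_def D2_def dim_diag_block_mat_map
    using Cons(2) by (auto intro!: arg_cong[where f = sum_list])
  have gx: "dim_col (f x) = dim_row (g x)" using Cons(2) by auto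
  have "diag_block_mat (map f (x # xs)) * diag_block_mat (map g (x # xs)) =
    four_block_mat (f x) (0\<^sub>m (dim_row (f x)) (dim_col D1)) (0\<^sub>m (dim_row D1) (dim_col (f x))) D1 *
    four_block_mat (g x) (0\<^sub>m (dim_row (g x)) (dim_col D2)) (0\<^sub>m (dim_row D2) (dim_col (g x))) D2"
    unfolding D1_def D2_def by (simp add: Let_def)
  also have "\<dots> = four_block_mat (f x * g x + 0\<^sub>m (dim_row (f x)) (dim_col D1) * 0\<^sub>m (dim_row D2) (dim_col (g x)))
     (f x * 0\<^sub>m (dim_row (g x)) (dim_col D2) + 0\<^sub>m (dim_row (f x)) (dim_col D1) * D2)
     (0\<^sub>m (dim_row D1) (dim_col (f x)) * g x + D1 * 0\<^sub>m (dim_row D2) (dim_col (g x)))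
     (0\<^sub>m (dim_row D1) (dim_col (f x)) * 0\<^sub>m (dim_row (g x)) (dim_col D2) + D1 * D2)"
    by (rule mult_four_block_mat) (use eq gx in auto)
  also have "\<dots> = four_block_mat (f x * g x) (0\<^sub>m (dim_row (f x)) (dim_col D2))
      (0\<^sub>m (dim_row D1) (dim_col (g x))) (D1 * D2)"
    using eq gx by (intro cong_four_block_mat) (auto intro!: eq_matI)
  also have "\<dots> = diag_block_mat (map (\<lambda>x. f x * g x) (x # xs))"
    by (simp add: Let_def IH[symmetric])
  finally show ?case .
qed

lemma transpose_diag_block_mat:
  "transpose_mat (diag_block_mat (map f xs)) = diag_block_mat (map (\<lambda>x. transpose_mat (f x :: real mat)) xs)"
proof (induction xs)
  case Nil thus ?case by (auto intro!: eq_matI)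
next
  case (Cons x xs)
  define D where "D = diag_block_mat (map f xs)"
  have "transpose_mat (diag_block_mat (map f (x # xs))) = transpose_mat
    (four_block_mat (f x) (0\<^sub>m (dim_row (f x)) (dim_col D)) (0\<^sub>m (dim_row D) (dim_col (f x))) D)"
    unfolding D_def by (simp add: Let_def)
  also have "\<dots> = four_block_mat (transpose_mat (f x)) (0\<^sub>m (dim_col (f x)) (dim_row D))
     (0\<^sub>m (dim_col D) (dim_row (f x))) (transpose_mat D)"
    by (subst transpose_four_block_mat) auto
  also have "\<dots> = diag_block_mat (map (\<lambda>x. transpose_mat (f x)) (x # xs))"
    unfolding D_def by (simp add: Let_def Cons[symmetric])
  finally show ?case .
qed

lemma diag_block_mat_add:
  assumes "\<forall>x\<in>set xs. dim_row (f x) = dim_row (g x) \<and> dim_col (f x) = dim_col (g x)"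
  shows "diag_block_mat (map f xs) + diag_block_mat (map g xs) = diag_block_mat (map (\<lambda>x. f x + (g x :: real mat)) xs)"
  using assms
proof (induction xs)
  case Nil thus ?case by (auto intro!: eq_matI)
next
  case (Cons x xs)
  define D1 where "D1 = diag_block_mat (map f xs)"
  define D2 where "D2 = diag_block_mat (map g xs)"
  have IH: "D1 + D2 = diag_block_mat (map (\<lambda>x. f x + g x) xs)" using Cons unfolding D1_def D2_def by auto
  have eq: "dim_col D1 = dim_col D2" "dim_row D1 = dim_row D2" unfolding D1_def D2_def dim_diag_block_mat_map
    using Cons(2) by (auto intro!: arg_cong[where f = sum_list])
  have gx: "dim_col (f x) = dim_col (g x)" "dim_row (f x) = dim_row (g x)" using Cons(2) by auto
  have "diag_block_mat (map f (x # xs)) + diag_block_mat (map g (x # xs)) =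
    four_block_mat (f x) (0\<^sub>m (dim_row (f x)) (dim_col D1)) (0\<^sub>m (dim_row D1) (dim_col (f x))) D1 +
    four_block_mat (g x) (0\<^sub>m (dim_row (g x)) (dim_col D2)) (0\<^sub>m (dim_row D2) (dim_col (g x))) D2"
    unfolding D1_def D2_def by (simp add: Let_def)
  also have "\<dots> = four_block_mat (f x + g x) (0\<^sub>m (dim_row (f x)) (dim_col D1) + 0\<^sub>m (dim_row (g x)) (dim_col D2))
     (0\<^sub>m (dim_row D1) (dim_col (f x)) + 0\<^sub>m (dim_row D2) (dim_col (g x))) (D1 + D2)"
    by (rule add_four_block_mat) (use eq gx in auto)
  also have "\<dots> = diag_block_mat (map (\<lambda>x. f x + g x) (x # xs))"
    using eq gx by (simp add: Let_def IH[symmetric])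
  finally show ?case .
qed

lemma diag_block_mat_one: "diag_block_mat (map (\<lambda>x. 1\<^sub>m (k x)) xs) = (1\<^sub>m (\<Sum>x\<leftarrow>xs. k x) :: real mat)"
  using diag_block_one_mat[of "map (\<lambda>x. 1\<^sub>m (k x)) xs"] by (simp add: o_def)

section \<open>Crossover designs with a type-H covariance\<close>

definition typeH_cov :: "nat \<Rightarrow> (nat \<Rightarrow> real) \<Rightarrow> real mat" where
  "typeH_cov p \<eta> = mat p p (\<lambda>(i,j). (if i = j then 1 else 0) + \<eta> i + \<eta> j)"

definition col_mat :: "nat \<Rightarrow> (nat \<Rightarrow> real) \<Rightarrow> real mat" where
  "col_mat k f = mat k 1 (\<lambda>(i,_). f i)"

lemma dim_col_mat[simp]: "dim_row (col_mat k f) = k" "dim_col (col_mat k f) = 1"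
  unfolding col_mat_def by auto

lemma dim_Ik[simp]: "dim_row (Ik k i j) = i" "dim_col (Ik k i j) = j"
  unfolding Ik_def by auto

lemma dim_ulsub[simp]: "dim_row (ulsub k A) = k" "dim_col (ulsub k A) = k"
  unfolding ulsub_def by auto

lemma ulsub_typeH_cov:
  "k \<le> p \<Longrightarrow> ulsub k (typeH_cov p \<eta>)
    = 1\<^sub>m k + col_mat k \<eta> * transpose_mat (col_mat k (\<lambda>_. 1)) + col_mat k (\<lambda>_. 1) * transpose_mat (col_mat k \<eta>)"
  by (rule eq_matI) (auto simp: ulsub_def typeH_cov_def col_mat_def scalar_prod_def)

lemma Ik_mult_left:
  assumes "dim_row A = p" "k \<le> p"
  shows "Ik k k p * A = mat k (dim_col A) (\<lambda>(i,j). A $$ (i,j))"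
proof (rule eq_matI)
  fix i j assume "i < dim_row (mat k (dim_col A) (\<lambda>(i,j). A $$ (i,j)))"
    "j < dim_col (mat k (dim_col A) (\<lambda>(i,j). A $$ (i,j)))"
  hence i: "i < k" and j: "j < dim_col A" by auto
  have "(Ik k k p * A) $$ (i,j) = (\<Sum>c\<in>{0..<p}. (if i = c \<and> i < k then 1 else 0) * A $$ (c,j))"
    using i j assms by (simp add: Ik_def scalar_prod_def)
  also have "\<dots> = (\<Sum>c\<in>{0..<p}. if c = i then A $$ (i,j) else 0)" using i by (intro sum.cong) auto
  also have "\<dots> = A $$ (i,j)" using i assms by simp
  finally show "(Ik k k p * A) $$ (i,j) = mat k (dim_col A) (\<lambda>(i,j). A $$ (i,j)) $$ (i,j)" using i j by simp
qed (use assms in auto)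

lemma Ik_mult_right:
  assumes "dim_col A = p" "k \<le> p"
  shows "A * transpose_mat (Ik k k p) = mat (dim_row A) k (\<lambda>(i,j). A $$ (i,j))"
proof (rule eq_matI)
  fix i j assume "i < dim_row (mat (dim_row A) k (\<lambda>(i,j). A $$ (i,j)))"
    "j < dim_col (mat (dim_row A) k (\<lambda>(i,j). A $$ (i,j)))"
  hence i: "i < dim_row A" and j: "j < k" by auto
  have "(A * transpose_mat (Ik k k p)) $$ (i,j) = (\<Sum>c\<in>{0..<p}. A $$ (i,c) * (if j = c \<and> j < k then 1 else 0))"
    using i j assms by (simp add: Ik_def scalar_prod_def)
  also have "\<dots> = (\<Sum>c\<in>{0..<p}. if c = j then A $$ (i,j) else 0)" using j by (intro sum.cong) auto
  also have "\<dots> = A $$ (i,j)" using j assms by simp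
  finally show "(A * transpose_mat (Ik k k p)) $$ (i,j) = mat (dim_row A) k (\<lambda>(i,j). A $$ (i,j)) $$ (i,j)"
    using i j by simp
qed (use assms in auto)

lemma ulsub_eq_Ik_conj:
  "A \<in> carrier_mat p p \<Longrightarrow> k \<le> p \<Longrightarrow> ulsub k A = Ik k k p * A * transpose_mat (Ik k k p)"
  by (auto simp: Ik_mult_left Ik_mult_right ulsub_def intro!: eq_matI)

lemma Ik_mult_ones: "k \<le> p \<Longrightarrow> Ik k k p * col_mat p (\<lambda>_. 1) = col_mat k (\<lambda>_. 1)"
  by (simp add: Ik_mult_left col_mat_def mat_eq_iff)

lemma pd_ulsub:
  assumes pd: "pd_mat p A" and k: "k \<le> p"
  shows "pd_mat k (ulsub k A)"
proof -
  have A: "A \<in> carrier_mat p p" and sym: "transpose_mat A = A"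
    and pos: "\<And>v. v \<in> carrier_vec p \<Longrightarrow> v \<noteq> 0\<^sub>v p \<Longrightarrow> v \<bullet> (A *\<^sub>v v) > 0"
    using pd unfolding pd_mat_def by blast+
  define E where "E = Ik k k p"
  have E: "E \<in> carrier_mat k p" unfolding E_def carrier_mat_def by simp
  have U: "ulsub k A = E * A * transpose_mat E" unfolding E_def by (rule ulsub_eq_Ik_conj[OF A k])
  have "transpose_mat (ulsub k A) = ulsub k A"
  proof (rule eq_matI)
    fix i j assume "i < dim_row (ulsub k A)" "j < dim_col (ulsub k A)"
    hence ij: "i < k" "j < k" by (auto simp: ulsub_def)
    have "A $$ (j,i) = transpose_mat A $$ (i,j)" using ij k A by auto
    thus "transpose_mat (ulsub k A) $$ (i,j) = ulsub k A $$ (i,j)" using ij sym by (simp add: ulsub_def)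
  qed (auto simp: ulsub_def)
  moreover have "v \<bullet> (ulsub k A *\<^sub>v v) > 0" if v: "v \<in> carrier_vec k" and v0: "v \<noteq> 0\<^sub>v k" for v
  proof -
    define w where "w = transpose_mat E *\<^sub>v v"
    have w: "w \<in> carrier_vec p" unfolding w_def using E v by auto
    have "w $ i = v $ i" if "i < k" for i
    proof -
      have "w $ i = (\<Sum>c\<in>{0..<k}. (if c = i \<and> c < k then 1 else 0) * v $ c)"
        unfolding w_def E_def using that k v by (simp add: Ik_def scalar_prod_def)
      also have "\<dots> = (\<Sum>c\<in>{0..<k}. if c = i then v $ i else 0)" by (intro sum.cong) auto
      finally show ?thesis using that by simp
    qed
    hence "w \<noteq> 0\<^sub>v p" using v v0 k by (auto intro!: eq_vecI)
    moreover have "ulsub k A *\<^sub>v v = E *\<^sub>v (A *\<^sub>v w)"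
      unfolding U w_def using E A v by (simp add: assoc_mult_mat_vec[of _ k p _ k] assoc_mult_mat_vec[of _ k p _ p])
    hence "v \<bullet> (ulsub k A *\<^sub>v v) = w \<bullet> (A *\<^sub>v w)"
      unfolding w_def using transpose_vec_mult_scalar[OF E _ v, of "A *\<^sub>v (transpose_mat E *\<^sub>v v)"] A E v by simp
    ultimately show ?thesis using pos[OF w] by simp
  qed
  moreover have "ulsub k A \<in> carrier_mat k k" by (simp add: ulsub_def)
  ultimately show ?thesis unfolding pd_mat_def by blast
qed

lemma minv_ulsub_gram:
  assumes pd: "pd_mat p \<Sigma>" and k: "k \<le> p"
    and T: "T \<in> carrier_mat p p" "transpose_mat T = T" "T * T = \<Sigma>"
  defines "R \<equiv> T * transpose_mat (Ik k k p) * minv (ulsub k \<Sigma>)"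
  shows "transpose_mat R * R = minv (ulsub k \<Sigma>)"
proof -
  define E where "E = Ik k k p"
  define Sk where "Sk = ulsub k \<Sigma>"
  define Wk where "Wk = minv Sk"
  have \<Sigma>: "\<Sigma> \<in> carrier_mat p p" using pd unfolding pd_mat_def by auto
  have pdk: "pd_mat k Sk" unfolding Sk_def by (rule pd_ulsub[OF pd k])
  have Wk: "Wk \<in> carrier_mat k k" "Sk * Wk = 1\<^sub>m k" unfolding Wk_def using minv[OF pdk] by auto
  have SkT: "transpose_mat Sk = Sk" and Skc: "Sk \<in> carrier_mat k k" using pdk unfolding pd_mat_def by auto
  have Sk_eq: "Sk = E * \<Sigma> * transpose_mat E" unfolding Sk_def E_def by (rule ulsub_eq_Ik_conj[OF \<Sigma> k])
  have d: "dim_row E = k" "dim_col E = p" "dim_row \<Sigma> = p" "dim_col \<Sigma> = p" "dim_row T = p" "dim_col T = p"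
    "dim_row Wk = k" "dim_col Wk = k" "dim_row Sk = k" "dim_col Sk = k"
    using \<Sigma> T Wk Skc unfolding E_def by auto
  have WkT: "transpose_mat Wk = Wk"
  proof -
    have "transpose_mat Wk * Sk = transpose_mat (transpose_mat Sk * Wk)" using d by (simp add: mat_dims_simps)
    also have "\<dots> = 1\<^sub>m k" unfolding SkT Wk(2) by simp
    finally have WkT_Sk: "transpose_mat Wk * Sk = 1\<^sub>m k" .
    have "transpose_mat Wk = transpose_mat Wk * (Sk * Wk)" using Wk(2) d by simp
    also have "\<dots> = (transpose_mat Wk * Sk) * Wk" using d by (simp add: mat_dims_simps)
    also have "\<dots> = Wk" unfolding WkT_Sk using d by simp
    finally show ?thesis .
  qed
  have TT: "T * (T * X) = \<Sigma> * X" if "dim_row X = p" for X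
  proof -
    have "T * T * X = \<Sigma> * X" using T by simp
    thus ?thesis using d that by (simp add: mat_dims_simps)
  qed
  have E\<Sigma>E: "E * (\<Sigma> * (transpose_mat E * X)) = Sk * X" if "dim_row X = k" for X
    unfolding Sk_eq using d that by (simp add: mat_dims_simps)
  have "transpose_mat R * R = transpose_mat Wk * (E * (T * (T * (transpose_mat E * Wk))))"
    unfolding R_def E_def[symmetric] Sk_def[symmetric] Wk_def[symmetric] using d T(2) by (simp add: mat_dims_simps)
  also have "\<dots> = transpose_mat Wk * (Sk * Wk)" using d by (simp add: TT E\<Sigma>E)
  also have "\<dots> = Wk" unfolding Wk(2) WkT using d by simp
  finally show ?thesis unfolding Wk_def Sk_def .
qed

lemma Umat_eq_diag_block_mat:
  assumes p: "0 < p"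
  shows "Umat n p = diag_block_mat (map (\<lambda>u. col_mat p (\<lambda>_. 1)) [0..<n])"
proof (induction n)
  case 0 thus ?case by (auto intro!: eq_matI simp: Umat_def)
next
  case (Suc n)
  have "diag_block_mat (map (\<lambda>u. col_mat p (\<lambda>_. 1)) [0..<Suc n])
      = four_block_mat (Umat n p) (0\<^sub>m (n * p) 1) (0\<^sub>m p n) (col_mat p (\<lambda>_. 1))"
    by (simp add: diag_block_mat_last Suc[symmetric] Let_def Umat_def)
  also have "\<dots> = Umat (Suc n) p"
  proof (rule eq_matI)
    fix i j assume "i < dim_row (Umat (Suc n) p)" "j < dim_col (Umat (Suc n) p)"
    hence i: "i < n * p + p" and j: "j < n + 1" by (auto simp: Umat_def)
    show "four_block_mat (Umat n p) (0\<^sub>m (n * p) 1) (0\<^sub>m p n) (col_mat p (\<lambda>_. 1)) $$ (i,j) = Umat (Suc n) p $$ (i,j)"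
    proof (cases "i < n * p")
      case True
      hence "i div p < n" by (simp add: less_mult_imp_div_less)
      thus ?thesis using True i j by (auto simp: Umat_def)
    next
      case False
      hence "i div p = n" using i p by (metis add.commute div_nat_eqI mult.commute mult_Suc not_less)
      thus ?thesis using False i j p by (auto simp: Umat_def col_mat_def)
    qed
  qed (auto simp: Umat_def)
  finally show ?case ..
qed

lemma mult_hcat:
  assumes "dim_row X = dim_col A" "dim_row Y = dim_col A"
  shows "hcat (A * X) (A * Y) = A * hcat X Y"
proof (rule eq_matI)
  fix i j assume "i < dim_row (A * hcat X Y)" "j < dim_col (A * hcat X Y)"
  hence i: "i < dim_row A" and j: "j < dim_col X + dim_col Y" by (auto simp: hcat_def)
  show "hcat (A * X) (A * Y) $$ (i,j) = (A * hcat X Y) $$ (i,j)"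
  proof (cases "j < dim_col X")
    case True
    have "col (hcat X Y) j = col X j" using True assms by (auto intro!: eq_vecI simp: hcat_def)
    thus ?thesis using True i j by (simp add: hcat_def)
  next
    case False
    have "col (hcat X Y) j = col Y (j - dim_col X)" using False j assms by (auto intro!: eq_vecI simp: hcat_def)
    thus ?thesis using False i j by (simp add: hcat_def)
  qed
qed (auto simp: hcat_def)

lemma hcat_mult_select_right:
  assumes "dim_row A = dim_row B"
  shows "hcat A B * mat (dim_col A + dim_col B) (dim_col B) (\<lambda>(i,j). if i = dim_col A + j then 1 else 0) = B"
proof (rule eq_matI)
  fix i j assume ij: "i < dim_row B" "j < dim_col B"
  have "(hcat A B * mat (dim_col A + dim_col B) (dim_col B) (\<lambda>(i,j). if i = dim_col A + j then 1 else 0)) $$ (i,j)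
    = (\<Sum>k\<in>{0..<dim_col A + dim_col B}. hcat A B $$ (i,k) * (if k = dim_col A + j then 1 else 0))"
    using ij assms by (simp add: hcat_def scalar_prod_def)
  also have "\<dots> = (\<Sum>k\<in>{0..<dim_col A + dim_col B}. if k = dim_col A + j then hcat A B $$ (i,k) else 0)"
    by (intro sum.cong) auto
  also have "\<dots> = B $$ (i,j)" using ij assms by (simp add: hcat_def)
  finally show "(hcat A B * mat (dim_col A + dim_col B) (dim_col B) (\<lambda>(i,j). if i = dim_col A + j then 1 else 0)) $$ (i,j)
      = B $$ (i,j)" .
qed (use assms in \<open>auto simp: hcat_def\<close>)

text \<open>This is \<open>O\<^sub>I\<close>, written without \<^const>\<open>msqrt\<close>, which is only determined up to choice.\<close>
definition Omat_unweighted :: "nat \<Rightarrow> nat \<Rightarrow> (nat \<Rightarrow> nat) \<Rightarrow> real mat" where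
  "Omat_unweighted p n l = (let M = Mmat p n l in
     transpose_mat M * pr_perp (hcat (M * Zmat n p) (M * Umat n p)) * M)"

lemma dim_Mmat: "dim_row (Mmat p n l) = (\<Sum>u\<leftarrow>[0..<n]. l u)" "dim_col (Mmat p n l) = n * p"
  unfolding Mmat_def dim_diag_block_mat_map by (simp_all add: sum_list_triv)

lemma Mmat_mult_Umat:
  assumes "\<forall>u<n. l u \<le> p" "0 < p"
  shows "Mmat p n l * Umat n p = diag_block_mat (map (\<lambda>u. col_mat (l u) (\<lambda>_. 1)) [0..<n])"
  unfolding Mmat_def Umat_eq_diag_block_mat[OF assms(2)] using assms(1)
  by (subst diag_block_mat_mult) (auto intro!: arg_cong[where f = diag_block_mat] simp: Ik_mult_ones)

lemma Wmat_nnd: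
  assumes pd: "pd_mat p \<Sigma>" and l: "\<forall>u<n. l u \<le> p"
  shows "nnd_mat (\<Sum>u\<leftarrow>[0..<n]. l u) (Wmat \<Sigma> n l)"
proof -
  obtain T where "nnd_mat p T" and TT: "T * T = \<Sigma>" using nnd_sqrt_exists[OF pd_imp_nnd[OF pd]] by auto
  hence T: "T \<in> carrier_mat p p" "transpose_mat T = T" unfolding nnd_mat_def by auto
  define R where "R = (\<lambda>u. T * transpose_mat (Ik (l u) (l u) p) * minv (ulsub (l u) \<Sigma>))"
  have minv_dims: "dim_row (minv (ulsub (l u) \<Sigma>)) = l u" "dim_col (minv (ulsub (l u) \<Sigma>)) = l u"
    if "u < n" for u
    using minv(1)[OF pd_ulsub[OF pd]] l that by auto
  have dim_R: "dim_row (R u) = p" "dim_col (R u) = l u" if "u < n" for u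
    unfolding R_def using minv_dims[OF that] T by auto
  have "Wmat \<Sigma> n l = diag_block_mat (map (\<lambda>u. transpose_mat (R u) * R u) [0..<n])"
    unfolding Wmat_def R_def using minv_ulsub_gram[OF pd _ T TT] l
    by (intro arg_cong[where f = diag_block_mat] map_cong) auto
  also have "\<dots> = transpose_mat (diag_block_mat (map R [0..<n])) * diag_block_mat (map R [0..<n])"
    unfolding transpose_diag_block_mat by (subst diag_block_mat_mult) (use dim_R in auto)
  finally have W: "Wmat \<Sigma> n l = \<dots>" .
  have "(\<Sum>u\<leftarrow>[0..<n]. dim_row (R u)) = (\<Sum>u\<leftarrow>[0..<n]. p)"
    "(\<Sum>u\<leftarrow>[0..<n]. dim_col (R u)) = (\<Sum>u\<leftarrow>[0..<n]. l u)"
    using dim_R by (auto intro!: arg_cong[where f = sum_list])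
  hence "dim_row (diag_block_mat (map R [0..<n])) = n * p"
    "dim_col (diag_block_mat (map R [0..<n])) = (\<Sum>u\<leftarrow>[0..<n]. l u)"
    unfolding dim_diag_block_mat_map by (simp_all add: sum_list_triv)
  thus ?thesis unfolding W by (intro gram_nnd[of _ "n * p"]) auto
qed

lemma observed_cov_mult_Wmat:
  assumes pd: "pd_mat p \<Sigma>" and l: "\<forall>u<n. l u \<le> p"
  shows "diag_block_mat (map (\<lambda>u. ulsub (l u) \<Sigma>) [0..<n]) * Wmat \<Sigma> n l = 1\<^sub>m (\<Sum>u\<leftarrow>[0..<n]. l u)"
proof -
  have "dim_row (minv (ulsub (l u) \<Sigma>)) = l u" if "u < n" for u
    using minv(1)[OF pd_ulsub[OF pd]] l that by auto
  hence "diag_block_mat (map (\<lambda>u. ulsub (l u) \<Sigma>) [0..<n]) * Wmat \<Sigma> n l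
      = diag_block_mat (map (\<lambda>u. ulsub (l u) \<Sigma> * minv (ulsub (l u) \<Sigma>)) [0..<n])"
    unfolding Wmat_def by (subst diag_block_mat_mult) auto
  also have "\<dots> = diag_block_mat (map (\<lambda>u. 1\<^sub>m (l u)) [0..<n])"
    using minv(2)[OF pd_ulsub[OF pd]] l by (intro arg_cong[where f = diag_block_mat] map_cong) auto
  finally show ?thesis unfolding diag_block_mat_one .
qed

lemma observed_typeH_cov:
  fixes \<eta> :: "nat \<Rightarrow> real"
  assumes l: "\<forall>u<n. l u \<le> p" and p: "0 < p"
  defines "H \<equiv> diag_block_mat (map (\<lambda>u. col_mat (l u) \<eta>) [0..<n])"
    and "MU \<equiv> Mmat p n l * Umat n p"
  shows "diag_block_mat (map (\<lambda>u. ulsub (l u) (typeH_cov p \<eta>)) [0..<n])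
    = 1\<^sub>m (\<Sum>u\<leftarrow>[0..<n]. l u) + H * transpose_mat MU + MU * transpose_mat H"
proof -
  let ?one = "\<lambda>u. col_mat (l u) (\<lambda>_. 1)" and ?eta = "\<lambda>u. col_mat (l u) \<eta>"
  have "diag_block_mat (map (\<lambda>u. ulsub (l u) (typeH_cov p \<eta>)) [0..<n])
      = diag_block_mat (map (\<lambda>u. 1\<^sub>m (l u) + ?eta u * transpose_mat (?one u) + ?one u * transpose_mat (?eta u)) [0..<n])"
    using l by (intro arg_cong[where f = diag_block_mat] map_cong) (auto simp: ulsub_typeH_cov)
  also have "\<dots> = diag_block_mat (map (\<lambda>u. 1\<^sub>m (l u)) [0..<n])
      + diag_block_mat (map (\<lambda>u. ?eta u * transpose_mat (?one u)) [0..<n])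
      + diag_block_mat (map (\<lambda>u. ?one u * transpose_mat (?eta u)) [0..<n])"
    by (simp add: diag_block_mat_add)
  also have "\<dots> = 1\<^sub>m (\<Sum>u\<leftarrow>[0..<n]. l u) + H * transpose_mat MU + MU * transpose_mat H"
    unfolding diag_block_mat_one H_def MU_def Mmat_mult_Umat[OF l p] transpose_diag_block_mat
    by (simp add: diag_block_mat_mult)
  finally show ?thesis .
qed

theorem Omat_typeH_cov:
  assumes pd: "pd_mat p (typeH_cov p \<eta>)" and l: "\<forall>u<n. l u \<le> p" and p: "0 < p"
  shows "Omat (typeH_cov p \<eta>) p n l = Omat_unweighted p n l"
proof -
  define m where "m = (\<Sum>u\<leftarrow>[0..<n]. l u)"
  define M where "M = Mmat p n l"
  define Y where "Y = hcat (M * Zmat n p) (M * Umat n p)"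
  define W where "W = Wmat (typeH_cov p \<eta>) n l"
  define S where "S = msqrt W"
  define V where "V = diag_block_mat (map (\<lambda>u. ulsub (l u) (typeH_cov p \<eta>)) [0..<n])"
  define H where "H = diag_block_mat (map (\<lambda>u. col_mat (l u) \<eta>) [0..<n])"
  \<comment> \<open>\<open>C\<close> selects the subject columns \<open>MU\<close> of \<open>Y\<close>, which carry the perturbation of \<open>V\<close>.\<close>
  define C where "C = mat (p + n) n (\<lambda>(i,j). if i = p + j then (1::real) else 0)"
  have dM: "dim_row M = m" "dim_col M = n * p" unfolding M_def m_def by (simp_all add: dim_Mmat)
  have dZU: "dim_row (Zmat n p) = n * p" "dim_col (Zmat n p) = p"
    "dim_row (Umat n p) = n * p" "dim_col (Umat n p) = n" unfolding Zmat_def Umat_def by auto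
  have Y: "Y \<in> carrier_mat m (p + n)" unfolding Y_def hcat_def using dM dZU by auto
  have H: "H \<in> carrier_mat m n"
    unfolding H_def m_def carrier_mat_def by (simp add: dim_diag_block_mat_map sum_list_triv)
  have C: "C \<in> carrier_mat (p + n) n" unfolding C_def by auto
  have YC: "Y * C = M * Umat n p"
    unfolding Y_def C_def using hcat_mult_select_right[of "M * Zmat n p" "M * Umat n p"] dM dZU by simp
  have S: "S \<in> carrier_mat m m" "transpose_mat S = S" "S * S = W"
    using msqrt[OF Wmat_nnd[OF pd l]] unfolding S_def W_def m_def nnd_mat_def by auto
  have V_eq: "V = 1\<^sub>m m + H * transpose_mat (Y * C) + (Y * C) * transpose_mat H"
    unfolding V_def H_def YC M_def m_def by (rule observed_typeH_cov[OF l p])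
  hence V: "V \<in> carrier_mat m m" using H Y C by auto
  have "V = 1\<^sub>m m + (H * transpose_mat C) * transpose_mat Y + Y * transpose_mat (H * transpose_mat C)"
    unfolding V_eq using H Y C by (simp add: mat_dims_simps)
  from pr_perp_weighted_eq[OF S(1,2) V _ Y _ this]
  have whitened: "S * pr_perp (S * Y) * S = pr_perp Y"
    using observed_cov_mult_Wmat[OF pd l] H C unfolding V_def S(3) W_def m_def by auto
  have "hcat (S * M * Zmat n p) (S * M * Umat n p) = S * Y"
    unfolding Y_def using dM dZU S(1) by (simp add: assoc_mult_mat_dims mult_hcat)
  hence "Omat (typeH_cov p \<eta>) p n l = transpose_mat M * S * pr_perp (S * Y) * S * M"
    unfolding Omat_def Let_def M_def[symmetric] W_def[symmetric] S_def[symmetric] by simp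
  also have "\<dots> = transpose_mat M * (S * pr_perp (S * Y) * S) * M"
    using dM S(1) Y unfolding pr_perp_def by (simp add: assoc_mult_mat_dims)
  finally show ?thesis unfolding whitened Omat_unweighted_def Let_def M_def[symmetric] Y_def[symmetric] .
qed

lemma pd_one_mat: "pd_mat n (1\<^sub>m n)"
  unfolding pd_mat_def using real_scalar_prod_self_eq_0_iff real_scalar_prod_self_nonneg
  by (auto simp: order.not_eq_order_implies_strict)

lemma Cd_cong:
  assumes "\<And>l. l \<in> PiE {0..<n} (\<lambda>_. {1..p}) \<Longrightarrow> Omat \<Sigma> p n l = Omat \<Sigma>' p n l"
  shows "Cd \<Sigma> p t n a d = Cd \<Sigma>' p t n a d"
proof -
  have "Cexp \<Sigma> p t n a d i j = Cexp \<Sigma>' p t n a d i j" for i j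
    unfolding Cexp_def Cl_def using assms by (intro eq_matI) (auto intro!: sum.cong)
  thus ?thesis unfolding Cd_def by simp
qed

theorem corollary2p1:
  fixes p t n :: nat and a :: "nat \<Rightarrow> real" and \<Phi> :: "real mat \<Rightarrow> real"
    and \<eta> :: "nat \<Rightarrow> real" and d :: "nat \<Rightarrow> nat \<Rightarrow> nat"
  assumes "dropout_dist p a"
    and "criterion t \<Phi>"
    and "pd_mat p (mat p p (\<lambda>(i,j). (if i = j then 1 else 0) + \<eta> i + \<eta> j))"
    and "phi1_optimal \<Phi> (1\<^sub>m p) p t n a d"
  shows "phi1_optimal \<Phi> (mat p p (\<lambda>(i,j). (if i = j then 1 else 0) + \<eta> i + \<eta> j)) p t n a d"
proof -
  \<comment> \<open>The information matrices coincide.\<close>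
  have p: "0 < p" using assms(1) unfolding dropout_dist_def by (cases p) auto
  have pd: "pd_mat p (typeH_cov p \<eta>)" using assms(3) unfolding typeH_cov_def .
  have one: "1\<^sub>m p = typeH_cov p (\<lambda>_. 0)" unfolding typeH_cov_def by (rule eq_matI) auto
  have "Omat (typeH_cov p \<eta>) p n l = Omat (1\<^sub>m p) p n l" if "l \<in> PiE {0..<n} (\<lambda>_. {1..p})" for l
  proof -
    have l: "\<forall>u<n. l u \<le> p" using that by auto
    show ?thesis unfolding one
      using Omat_typeH_cov[OF pd l p] Omat_typeH_cov[OF pd_one_mat[of p, unfolded one] l p] by simp
  qed
  hence "Cd (typeH_cov p \<eta>) p t n a d' = Cd (1\<^sub>m p) p t n a d'" for d' by (rule Cd_cong)
  thus ?thesis using assms(4) unfolding phi1_optimal_def typeH_cov_def by simp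
qed

end
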